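(* Let $\mathbf X$ be a coin process with $\underline H(\mathbf X)>0$ and $\mathbf Y$ any target process. Then \[ R^\star_{\mathrm{int}}(\mathbf X,\mathbf Y)\le\frac{\overline H(\mathbf Y)}{\underline H(\mathbf X)}, \qquad R^\star(\mathbf X,\mathbf Y)\ge\max\Big[\frac{\overline H(\mathbf Y)}{\overline H(\mathbf X)},\frac{\underline H(\mathbf Y)}{\underline H(\mathbf X)}\Big]. \]
   Context: Logarithms are base 2. $\mathcal X$, $\mathcal Y$ are finite sets; $\mathbf X=\{X^m\}$ (coin) and $\mathbf Y=\{Y^n\}$ (target) are arbitrary processes given by consistent families of distributions. Spectral sup- and inf-entropy: $\overline H(\mathbf X)=\inf\{\lambda:\lim_{n\to\infty}\Pr(\frac1n\log\frac{1}{P_{X^n}(X^n)}\ge\lambda)=0\}$, $\underline H(\mathbf X)=\sup\{\lambda:\lim_{n\to\infty}\Pr(\frac1n\log\frac{1}{P_{X^n}(X^n)}\le\lambda)=0\}$, and likewise for $\mathbf Y$. A random number generation algorithm for $Y^n$ is a map $\phi:\bigcup_{i\ge0}\mathcal X^i\to\{\bot\}\cup\mathcal Y^n$; its leaves are the finite sequences $s$ with $\phi(s)\in\mathcal Y^n$ and $\phi(s')=\bot$ for all proper prefixes $s'$; it is required to satisfy the validity condition $\sum_{\text{leaves } s:\phi(s)=y^n}P_{X^{|s|}}(s)=P_{Y^n}(y^n)$ for all $y^n$. Its stopping time is the length of the (first) leaf reached by $X_1,X_2,\dots$ ($\infty$ if none). For a sequence of algorithms $\phi_n$ ($n=1,2,\dots$)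 generating $Y^n$ with stopping times $T_n$, a rate $R\ge0$ is achievable if $\lim_{n\to\infty}\Pr(T_n>nR)=0$. $R^\star(\mathbf X,\mathbf Y)$ is the infimum of rates achievable by some sequence of valid algorithms, and $R^\star_{\mathrm{int}}(\mathbf X,\mathbf Y)$ the infimum of rates achievable when $\phi_n$ is the interval algorithm. Interval algorithm: for $s\in\mathcal X^i$ define $\mathcal I_s=[\underline\alpha_s,\overline\alpha_s)$ by $\mathcal I_\bot=[0,1)$ and $\underline\alpha_{sx}=\underline\alpha_s+(\overline\alpha_s-\underline\alpha_s)\sum_{k<x}P_{X_{i+1}|X^i}(k|s)$, $\overline\alpha_{sx}=\underline\alpha_s+(\overline\alpha_s-\underline\alpha_s)\sum_{k\le x}P_{X_{i+1}|X^i}(k|s)$ (identifying $\mathcal X=\{1,\dots,M\}$); define $\mathcal J_t$, $t\in\mathcal Y^j$, likewise from $P_{Y_{j+1}|Y^j}$; the algorithm stops at the first $m$ with $\mathcal I_{X^m}\subseteq\mathcal J_{y^n}$ for some $y^n\in\mathcal Y^n$ and outputs that $y^n$. *)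

theory Defs
  imports "HOL-Analysis.Analysis"
begin

text \<open>A process over a finite alphabet is a consistent family of distributions,
  represented by the function mapping a finite sequence s to P_{X^|s|}(s).\<close>

definition process :: "('a::finite list \<Rightarrow> real) \<Rightarrow> bool" where
  "process P \<longleftrightarrow> P [] = 1 \<and> (\<forall>s. 0 \<le> P s) \<and> (\<forall>s. P s = (\<Sum>a\<in>UNIV. P (s @ [a])))"

definition prob_len :: "('a::finite list \<Rightarrow> real) \<Rightarrow> nat \<Rightarrow> ('a list \<Rightarrow> bool) \<Rightarrow> real" where
  "prob_len P n A = (\<Sum>s\<in>{s. length s = n \<and> A s}. P s)"

definition info_rate :: "('a list \<Rightarrow> real) \<Rightarrow> nat \<Rightarrow> 'a list \<Rightarrow> real" where
  "info_rate P n s = (1 / real n) * log 2 (1 / P s)"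

definition sup_ent :: "('a::finite list \<Rightarrow> real) \<Rightarrow> real" where
  "sup_ent P = Inf {t. (\<lambda>n. prob_len P n (\<lambda>s. info_rate P n s \<ge> t)) \<longlonglongrightarrow> 0}"

definition inf_ent :: "('a::finite list \<Rightarrow> real) \<Rightarrow> real" where
  "inf_ent P = Sup {t. (\<lambda>n. prob_len P n (\<lambda>s. info_rate P n s \<le> t)) \<longlonglongrightarrow> 0}"

text \<open>Random number generation algorithms: None plays the role of \<bottom>.\<close>
definition is_leaf :: "('a list \<Rightarrow> 'b list option) \<Rightarrow> 'a list \<Rightarrow> bool" where
  "is_leaf \<phi> s \<longleftrightarrow> \<phi> s \<noteq> None \<and> (\<forall>i<length s. \<phi> (take i s) = None)"

definition valid_alg ::
  "('a::finite list \<Rightarrow> real) \<Rightarrow> ('b::finite list \<Rightarrow> real) \<Rightarrow> nat \<Rightarrow> ('a list \<Rightarrow> 'b list option) \<Rightarrow> bool" where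
  "valid_alg PX PY n \<phi> \<longleftrightarrow>
     (\<forall>s ys. \<phi> s = Some ys \<longrightarrow> length ys = n) \<and>
     (\<forall>ys. length ys = n \<longrightarrow> (\<Sum>\<^sub>\<infinity>s\<in>{s. is_leaf \<phi> s \<and> \<phi> s = Some ys}. PX s) = PY ys)"

text \<open>Pr(T > r) for the stopping time T of \<phi> (for r \<ge> 0): T > r iff T > floor r iff
  \<phi>(X^i) = \<bottom> for all i \<le> floor r.\<close>
definition prob_T_gt :: "('a::finite list \<Rightarrow> real) \<Rightarrow> ('a list \<Rightarrow> 'b list option) \<Rightarrow> real \<Rightarrow> real" where
  "prob_T_gt PX \<phi> r = prob_len PX (nat \<lfloor>r\<rfloor>) (\<lambda>s. \<forall>i\<le>length s. \<phi> (take i s) = None)"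

definition achievable :: "('a::finite list \<Rightarrow> real) \<Rightarrow> (nat \<Rightarrow> 'a list \<Rightarrow> 'b list option) \<Rightarrow> real \<Rightarrow> bool" where
  "achievable PX \<phi>s R \<longleftrightarrow> 0 \<le> R \<and> (\<lambda>n. prob_T_gt PX (\<phi>s n) (real n * R)) \<longlonglongrightarrow> 0"

definition R_star :: "('a::finite list \<Rightarrow> real) \<Rightarrow> ('b::finite list \<Rightarrow> real) \<Rightarrow> ereal" where
  "R_star PX PY = Inf {ereal R | R. \<exists>\<phi>s. (\<forall>n\<ge>1. valid_alg PX PY n (\<phi>s n)) \<and> achievable PX \<phi>s R}"

definition cond_prob :: "('a list \<Rightarrow> real) \<Rightarrow> 'a list \<Rightarrow> 'a \<Rightarrow> real" where
  "cond_prob P s k = P (s @ [k]) / P s"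

fun interval_aux :: "('a::{finite,linorder} list \<Rightarrow> real) \<Rightarrow> 'a list \<Rightarrow> real \<times> real \<Rightarrow> 'a list \<Rightarrow> real \<times> real" where
  "interval_aux P pre (lo, hi) [] = (lo, hi)"
| "interval_aux P pre (lo, hi) (x # xs) =
     interval_aux P (pre @ [x])
       (lo + (hi - lo) * (\<Sum>k\<in>{k. k < x}. cond_prob P pre k),
        lo + (hi - lo) * (\<Sum>k\<in>{k. k \<le> x}. cond_prob P pre k)) xs"

definition ends :: "('a::{finite,linorder} list \<Rightarrow> real) \<Rightarrow> 'a list \<Rightarrow> real \<times> real" where
  "ends P s = interval_aux P [] (0, 1) s"

definition interval :: "('a::{finite,linorder} list \<Rightarrow> real) \<Rightarrow> 'a list \<Rightarrow> real set" where
  "interval P s = {fst (ends P s) ..< snd (ends P s)}"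

definition interval_alg ::
  "('a::{finite,linorder} list \<Rightarrow> real) \<Rightarrow> ('b::{finite,linorder} list \<Rightarrow> real) \<Rightarrow> nat \<Rightarrow> 'a list \<Rightarrow> 'b list option" where
  "interval_alg PX PY n s =
     (if \<exists>ys. length ys = n \<and> interval PX s \<subseteq> interval PY ys
      then Some (SOME ys. length ys = n \<and> interval PX s \<subseteq> interval PY ys) else None)"

definition R_star_int :: "('a::{finite,linorder} list \<Rightarrow> real) \<Rightarrow> ('b::{finite,linorder} list \<Rightarrow> real) \<Rightarrow> ereal" where
  "R_star_int PX PY = Inf {ereal R | R. achievable PX (\<lambda>n. interval_alg PX PY n) R}"

end

theory Submission
  imports Defs "HOL-Real_Asymp.Real_Asymp"
begin

text \<open>
  Suppose valid algorithms for Y^n stop by time m = nR except with vanishing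
  probability. Every length-m coin sequence that has stopped extends a leaf with some output y,
  and the sequences extending leaves with output y carry mass at most P(y). At most 2^{mb} coin
  sequences have probability at least 2^{-mb}, and they reach at most that many target words;
  on target words of probability at most 2^{-na} they therefore carry mass at most 2^{mb - na},
  which vanishes when R b < a. For b > sup_ent X and a < sup_ent Y this is a contradiction, since
  the light target words keep non-vanishing mass while the light coin sequences that would have
  to supply it have vanishing mass. For b > inf_ent X and a < inf_ent Y it is one as well, since
  the heavy coin sequences keep non-vanishing mass while the heavy target words that would have
  to receive it have vanishing mass.

  The interval algorithm fails to stop by time m = nR only on coin sequences whose
  interval lies inside no target interval of length n. Such an interval of length at most
  \<delta> = 2^{-ma} meets either a light target interval (probability at most 2^{-nb}) or lies within
  \<delta> of an endpoint of one of the at most 2^{nb} heavy ones. Hence the failure probability is at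
  most Pr(P(X^m) > \<delta>) + Pr(Y^n light) + 4 \<delta> 2^{nb}, which vanishes when b < R a,
  a < inf_ent X and b > sup_ent Y.
\<close>

lemma process_nonneg: "process P \<Longrightarrow> 0 \<le> P s"
  unfolding process_def by blast

lemma process_Nil: "process P \<Longrightarrow> P [] = 1"
  unfolding process_def by blast

lemma process_eq_sum_snoc: "process P \<Longrightarrow> P s = (\<Sum>a\<in>UNIV. P (s @ [a]))"
  unfolding process_def by blast

lemma process_snoc_le: "process P \<Longrightarrow> P (s @ [x]) \<le> P s"
  using member_le_sum[of x UNIV "\<lambda>a. P (s @ [a])"]
  by (simp add: process_nonneg process_eq_sum_snoc[of P s, symmetric])

lemma finite_length_eq: "finite {x::'a::finite list. length x = L \<and> Q x}"
  using finite_lists_length_eq[of "UNIV::'a set" L] by (rule rev_finite_subset) auto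

lemma finite_length_le: "finite {x::'a::finite list. length x \<le> L}"
proof -
  have "{x::'a list. length x \<le> L} = (\<Union>l\<in>{..L}. {x. length x = l})" by auto
  then show ?thesis by (simp add: finite_length_eq[where Q="\<lambda>_. True", simplified])
qed

lemma length_Suc_take_eq_image_snoc:
  assumes "k \<le> L"
  shows "{x::'a list. length x = Suc L \<and> take k x = u} =
         (\<lambda>(x, a). x @ [a]) ` ({x. length x = L \<and> take k x = u} \<times> UNIV)"
proof (intro set_eqI iffI)
  fix y :: "'a list" assume "y \<in> {x. length x = Suc L \<and> take k x = u}"
  then have y: "length y = Suc L" "take k y = u" by auto
  then have "y = butlast y @ [last y]"
    by (metis append_butlast_last_id list.size(3) nat.distinct(1))
  moreover have "take k (butlast y) = u" "length (butlast y) = L"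
    using y assms by (simp_all add: butlast_conv_take)
  ultimately show "y \<in> (\<lambda>(x, a). x @ [a]) ` ({x. length x = L \<and> take k x = u} \<times> UNIV)"
    by (metis (mono_tags, lifting) UNIV_I case_prod_conv image_eqI mem_Collect_eq mem_Sigma_iff)
qed (use assms in auto)

lemma sum_extensions:
  assumes P: "process P" and u: "length u = k" and kL: "k \<le> L"
  shows "(\<Sum>x | length x = L \<and> take k x = u. P x) = P u"
  using kL
proof (induction L)
  case 0
  then have "{x::'a list. length x = 0 \<and> take k x = u} = {u}" using u by auto
  then show ?case by simp
next
  case (Suc L)
  show ?case
  proof (cases "k = Suc L")
    case True
    then have "{x::'a list. length x = Suc L \<and> take k x = u} = {u}" using u by auto
    then show ?thesis by simp
  next
    case False
    then have kL: "k \<le> L" using Suc by simp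
    have inj: "inj_on (\<lambda>(x, a). x @ [a]) ({x::'a list. length x = L \<and> take k x = u} \<times> UNIV)"
      by (auto simp: inj_on_def)
    have "(\<Sum>x | length x = Suc L \<and> take k x = u. P x)
        = (\<Sum>(x, a) \<in> {x::'a list. length x = L \<and> take k x = u} \<times> UNIV. P (x @ [a]))"
      unfolding length_Suc_take_eq_image_snoc[OF kL] by (subst sum.reindex[OF inj]) (simp add: case_prod_beta)
    also have "\<dots> = (\<Sum>x | length x = L \<and> take k x = u. \<Sum>a\<in>UNIV. P (x @ [a]))"
      by (simp only: sum.cartesian_product)
    also have "\<dots> = (\<Sum>x | length x = L \<and> take k x = u. P x)"
      by (simp add: process_eq_sum_snoc[OF P, symmetric])
    finally show ?thesis using Suc.IH kL by simp
  qed
qed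

lemma sum_length_eq_1: "process P \<Longrightarrow> (\<Sum>x | length x = L. P x) = 1"
  using sum_extensions[of P "[]" 0 L] process_Nil[of P] by simp

lemma process_le_1: "process P \<Longrightarrow> P s \<le> 1"
  using member_le_sum[of s "{x. length x = length s}" P] sum_length_eq_1[of P "length s"]
  by (simp add: process_nonneg finite_length_eq[where Q="\<lambda>_. True", simplified])

lemma sum_extensions_of_set:
  assumes P: "process P" and U: "\<And>u. u \<in> U \<Longrightarrow> length u = k" and kL: "k \<le> L"
  shows "(\<Sum>x | length x = L \<and> take k x \<in> U. P x) = (\<Sum>u\<in>U. P u)"
proof -
  have "finite U"
    by (rule finite_subset[OF _ finite_length_eq[where L=k and Q="\<lambda>_. True"]]) (auto simp: U)
  have "{x. length x = L \<and> take k x \<in> U} = (\<Union>u\<in>U. {x. length x = L \<and> take k x = u})" by auto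
  then have "(\<Sum>x | length x = L \<and> take k x \<in> U. P x) = (\<Sum>u\<in>U. \<Sum>x | length x = L \<and> take k x = u. P x)"
    by (simp only:) (rule sum.UNION_disjoint, use \<open>finite U\<close> finite_length_eq in auto)
  also have "\<dots> = (\<Sum>u\<in>U. P u)"
    using sum_extensions[OF P U kL] by simp
  finally show ?thesis .
qed

lemma prefixes_comparable:
  assumes "take (length s) x = s" "take (length s') x = s'"
  shows "take (length s) s' = s \<or> take (length s') s = s'"
  using assms by (metis le_cases min.absorb1 take_take)

lemma sum_prefix_free:
  assumes P: "process P" and F: "finite F" and len: "\<And>s. s \<in> F \<Longrightarrow> length s \<le> L"
    and pf: "\<And>s s'. s \<in> F \<Longrightarrow> s' \<in> F \<Longrightarrow> take (length s) s' = s \<Longrightarrow> s = s'"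
  shows "(\<Sum>s\<in>F. P s) = (\<Sum>x | length x = L \<and> (\<exists>s\<in>F. take (length s) x = s). P x)"
proof -
  have eq: "{x. length x = L \<and> (\<exists>s\<in>F. take (length s) x = s)}
      = (\<Union>s\<in>F. {x. length x = L \<and> take (length s) x = s})" by auto
  have disj: "{x. length x = L \<and> take (length s) x = s} \<inter> {x. length x = L \<and> take (length s') x = s'} = {}"
    if "s \<in> F" "s' \<in> F" "s \<noteq> s'" for s s'
  proof -
    have False if "take (length s) x = s" "take (length s') x = s'" for x
      using prefixes_comparable[OF that] pf[of s s'] pf[of s' s] \<open>s \<in> F\<close> \<open>s' \<in> F\<close> \<open>s \<noteq> s'\<close> by auto
    then show ?thesis by blast
  qed
  have "(\<Sum>x | length x = L \<and> (\<exists>s\<in>F. take (length s) x = s). P x)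
      = (\<Sum>s\<in>F. \<Sum>x | length x = L \<and> take (length s) x = s. P x)"
    unfolding eq by (rule sum.UNION_disjoint) (use F finite_length_eq disj in auto)
  also have "\<dots> = (\<Sum>s\<in>F. P s)"
    using sum_extensions[OF P refl len] by simp
  finally show ?thesis by simp
qed

lemma prob_len_nonneg: "process P \<Longrightarrow> 0 \<le> prob_len P n A"
  unfolding prob_len_def by (rule sum_nonneg) (simp add: process_nonneg)

lemma prob_len_mono:
  "process P \<Longrightarrow> (\<And>s. length s = n \<Longrightarrow> A s \<Longrightarrow> B s) \<Longrightarrow> prob_len P n A \<le> prob_len P n B"
  unfolding prob_len_def by (rule sum_mono2) (auto simp: finite_length_eq process_nonneg)

lemma prob_len_True: "process P \<Longrightarrow> prob_len P n (\<lambda>s. True) = 1"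
  unfolding prob_len_def using sum_length_eq_1 by simp

lemma prob_len_le_1: "process P \<Longrightarrow> prob_len P n A \<le> 1"
  using prob_len_mono[of P n A "\<lambda>s. True"] prob_len_True[of P n] by simp

lemma prob_len_compl:
  assumes P: "process P"
  shows "prob_len P n A + prob_len P n (\<lambda>s. \<not> A s) = 1"
proof -
  have "prob_len P n A + prob_len P n (\<lambda>s. \<not> A s) = (\<Sum>x | length x = n. P x)"
    unfolding prob_len_def
    by (subst sum.union_disjoint[symmetric]) (auto simp: finite_length_eq intro!: sum.cong)
  then show ?thesis using sum_length_eq_1[OF P] by simp
qed

lemma prob_len_disj_le:
  assumes P: "process P"
  shows "prob_len P n (\<lambda>s. A s \<or> B s) \<le> prob_len P n A + prob_len P n B"
proof -
  have "{s. length s = n \<and> (A s \<or> B s)} = {s. length s = n \<and> A s} \<union> {s. length s = n \<and> B s}" by auto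
  then show ?thesis
    unfolding prob_len_def by (simp add: sum_Un finite_length_eq sum_nonneg process_nonneg[OF P])
qed

lemma prob_len_cong_pos:
  assumes P: "process P" and AB: "\<And>s. length s = n \<Longrightarrow> 0 < P s \<Longrightarrow> A s \<longleftrightarrow> B s"
  shows "prob_len P n A = prob_len P n B"
proof -
  have pos: "prob_len P n C = (\<Sum>s | length s = n \<and> C s \<and> 0 < P s. P s)" for C
    unfolding prob_len_def
    by (rule sum.mono_neutral_right) (auto simp: finite_length_eq less_le process_nonneg[OF P])
  show ?thesis unfolding pos by (rule sum.cong[OF Collect_cong refl]) (use AB in auto)
qed

section \<open>Information rates and spectral entropies\<close>

lemma info_rate_nonneg: "process P \<Longrightarrow> 0 \<le> info_rate P n s"
proof -
  assume P: "process P"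
  have "0 \<le> log 2 (1 / P s)"
  proof (cases "P s = 0")
    case False
    then have "0 < P s" "P s \<le> 1" using process_nonneg[OF P, of s] process_le_1[OF P, of s] by simp_all
    then show ?thesis by simp
  qed (simp add: log_def)
  then show ?thesis unfolding info_rate_def by simp
qed

lemma info_rate_ge_iff:
  assumes "0 < P s" "0 < n"
  shows "t \<le> info_rate P n s \<longleftrightarrow> P s \<le> 2 powr (- (real n * t))"
proof -
  have "real n * info_rate P n s = - log 2 (P s)"
    unfolding info_rate_def using assms by (simp add: log_divide)
  then have "t \<le> info_rate P n s \<longleftrightarrow> log 2 (P s) \<le> - (real n * t)"
    using assms by (smt (verit, best) mult_le_cancel_left_pos of_nat_0_less_iff)
  also have "\<dots> \<longleftrightarrow> P s \<le> 2 powr (- (real n * t))" by (rule log_le_iff) (use assms in auto)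
  finally show ?thesis .
qed

lemma info_rate_le_iff:
  assumes "0 < P s" "0 < n"
  shows "info_rate P n s \<le> t \<longleftrightarrow> 2 powr (- (real n * t)) \<le> P s"
proof -
  have "real n * info_rate P n s = - log 2 (P s)"
    unfolding info_rate_def using assms by (simp add: log_divide)
  then have "info_rate P n s \<le> t \<longleftrightarrow> - (real n * t) \<le> log 2 (P s)"
    using assms by (smt (verit, best) mult_le_cancel_left_pos of_nat_0_less_iff)
  also have "\<dots> \<longleftrightarrow> 2 powr (- (real n * t)) \<le> P s" by (rule le_log_iff) (use assms in auto)
  finally show ?thesis .
qed

lemma prob_len_info_rate_ge:
  "process P \<Longrightarrow> 0 < n \<Longrightarrow>
     prob_len P n (\<lambda>s. t \<le> info_rate P n s) = prob_len P n (\<lambda>s. P s \<le> 2 powr (- (real n * t)))"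
  by (rule prob_len_cong_pos) (simp_all add: info_rate_ge_iff)

lemma prob_len_info_rate_le:
  "process P \<Longrightarrow> 0 < n \<Longrightarrow>
     prob_len P n (\<lambda>s. info_rate P n s \<le> t) = prob_len P n (\<lambda>s. 2 powr (- (real n * t)) \<le> P s)"
  by (rule prob_len_cong_pos) (simp_all add: info_rate_le_iff)

lemma card_heavy_le:
  assumes P: "process P"
  shows "real (card {x. length x = m \<and> 2 powr (- b) \<le> P x}) \<le> 2 powr b"
proof -
  let ?G = "{x. length x = m \<and> 2 powr (- b) \<le> P x}"
  have "real (card ?G) * 2 powr (- b) = (\<Sum>x\<in>?G. 2 powr (- b))" by simp
  also have "\<dots> \<le> (\<Sum>x\<in>?G. P x)" by (rule sum_mono) simp
  also have "\<dots> \<le> 1" using prob_len_le_1[OF P, of m "\<lambda>x. 2 powr (- b) \<le> P x"] by (simp add: prob_len_def)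
  finally show ?thesis by (simp add: powr_minus field_simps)
qed

definition sup_ent_set :: "('a::finite list \<Rightarrow> real) \<Rightarrow> real set" where
  "sup_ent_set P = {t. (\<lambda>n. prob_len P n (\<lambda>s. t \<le> info_rate P n s)) \<longlonglongrightarrow> 0}"

definition inf_ent_set :: "('a::finite list \<Rightarrow> real) \<Rightarrow> real set" where
  "inf_ent_set P = {t. (\<lambda>n. prob_len P n (\<lambda>s. info_rate P n s \<le> t)) \<longlonglongrightarrow> 0}"

lemma sup_ent_eq_Inf: "sup_ent P = Inf (sup_ent_set P)"
  unfolding sup_ent_def sup_ent_set_def by simp

lemma inf_ent_eq_Sup: "inf_ent P = Sup (inf_ent_set P)"
  unfolding inf_ent_def inf_ent_set_def by simp

lemma sup_ent_set_pos:
  assumes P: "process P" and t: "t \<in> sup_ent_set P"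
  shows "0 < t"
proof (rule ccontr)
  assume "\<not> 0 < t"
  then have "prob_len P n (\<lambda>s. t \<le> info_rate P n s) = prob_len P n (\<lambda>s. True)" for n
    using info_rate_nonneg[OF P, of n] unfolding prob_len_def by (metis (lifting) linorder_not_le order_trans)
  then have "(\<lambda>n. 1::real) \<longlonglongrightarrow> 0" using t prob_len_True[OF P] unfolding sup_ent_set_def by simp
  then show False using LIMSEQ_unique[OF tendsto_const] by fastforce
qed

lemma prob_len_tendsto_0_mono:
  assumes P: "process P" and lim: "(\<lambda>n. prob_len P n (A n)) \<longlonglongrightarrow> 0"
    and AB: "\<And>n s. B n s \<Longrightarrow> A n s"
  shows "(\<lambda>n. prob_len P n (B n)) \<longlonglongrightarrow> 0"
  by (rule real_tendsto_sandwich[OF _ _ tendsto_const lim])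
    (simp_all add: prob_len_nonneg[OF P] prob_len_mono[OF P] AB)

lemma sup_ent_set_upclosed: "process P \<Longrightarrow> t \<in> sup_ent_set P \<Longrightarrow> t \<le> t' \<Longrightarrow> t' \<in> sup_ent_set P"
  unfolding sup_ent_set_def by (auto elim!: prob_len_tendsto_0_mono)

lemma inf_ent_set_downclosed: "process P \<Longrightarrow> t \<in> inf_ent_set P \<Longrightarrow> t' \<le> t \<Longrightarrow> t' \<in> inf_ent_set P"
  unfolding inf_ent_set_def by (auto elim!: prob_len_tendsto_0_mono)

lemma inf_ent_set_less_sup_ent_set:
  assumes P: "process P" and t: "t \<in> inf_ent_set P" and t': "t' \<in> sup_ent_set P"
  shows "t < t'"
proof (rule ccontr)
  assume "\<not> t < t'"
  then have "1 \<le> prob_len P n (\<lambda>s. t' \<le> info_rate P n s) + prob_len P n (\<lambda>s. info_rate P n s \<le> t)" for n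
    using prob_len_compl[OF P, of n "\<lambda>s. info_rate P n s \<le> t"]
      prob_len_mono[OF P, of n "\<lambda>s. \<not> info_rate P n s \<le> t" "\<lambda>s. t' \<le> info_rate P n s"] by auto
  moreover have "(\<lambda>n. prob_len P n (\<lambda>s. t' \<le> info_rate P n s) + prob_len P n (\<lambda>s. info_rate P n s \<le> t))
      \<longlonglongrightarrow> 0 + 0"
    by (rule tendsto_add) (use t t' in \<open>auto simp: inf_ent_set_def sup_ent_set_def\<close>)
  ultimately have "1 \<le> (0::real) + 0" by (intro LIMSEQ_le_const) auto
  then show False by simp
qed

lemma neg_in_inf_ent_set:
  assumes P: "process P"
  shows "-1 \<in> inf_ent_set P"
proof -
  have empty: "{s. length s = n \<and> info_rate P n s \<le> -1} = {}" for n
    using info_rate_nonneg[OF P, of n] by (smt (verit) Collect_empty_eq)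
  have "prob_len P n (\<lambda>s. info_rate P n s \<le> -1) = 0" for n
    unfolding prob_len_def by (simp only: empty sum.empty)
  then show ?thesis unfolding inf_ent_set_def by simp
qed

text \<open>The at most |A|^n sequences of probability at most 2^{-n(log |A| + 1)} carry total mass at most 2^{-n}.\<close>
lemma log_card_in_sup_ent_set:
  assumes P: "process (P :: 'a::finite list \<Rightarrow> real)"
  shows "log 2 (real CARD('a)) + 1 \<in> sup_ent_set P"
proof -
  define t where "t = log 2 (real CARD('a)) + 1"
  have bnd: "prob_len P n (\<lambda>s. t \<le> info_rate P n s) \<le> (1/2) ^ n" if n: "0 < n" for n
  proof -
    have "prob_len P n (\<lambda>s. t \<le> info_rate P n s) = prob_len P n (\<lambda>s. P s \<le> 2 powr (- (real n * t)))"
      by (rule prob_len_info_rate_ge[OF P n])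
    also have "\<dots> \<le> (\<Sum>y::'a list | length y = n. 2 powr (- (real n * t)))"
      unfolding prob_len_def
      by (rule order_trans[OF sum_mono sum_mono2]) (auto simp: finite_length_eq[where Q="\<lambda>_. True", simplified])
    also have "\<dots> = real CARD('a) ^ n * 2 powr (- (real n * t))"
      using card_lists_length_eq[of "UNIV::'a set" n] by simp
    also have "real CARD('a) ^ n = (2 powr log 2 (real CARD('a))) powr real n"
      by (simp add: powr_realpow)
    also have "\<dots> * 2 powr (- (real n * t)) = 2 powr (real n * log 2 (real CARD('a)) - real n * t)"
      unfolding powr_powr by (simp add: powr_add[symmetric] mult.commute)
    also have "\<dots> = (1/2) ^ n"
      by (simp add: t_def algebra_simps powr_minus powr_realpow power_one_over inverse_eq_divide)
    finally show ?thesis .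
  qed
  have "(\<lambda>n. prob_len P n (\<lambda>s. t \<le> info_rate P n s)) \<longlonglongrightarrow> 0"
  proof (rule real_tendsto_sandwich[OF _ _ tendsto_const])
    show "(\<lambda>n. (1/2::real) ^ n) \<longlonglongrightarrow> 0" by (rule LIMSEQ_power_zero) simp
  qed (use bnd in \<open>auto simp: prob_len_nonneg[OF P] intro: eventually_sequentiallyI[of 1]\<close>)
  then show ?thesis unfolding sup_ent_set_def t_def by simp
qed

lemma bdd_below_sup_ent_set: "process P \<Longrightarrow> bdd_below (sup_ent_set P)"
  by (rule bdd_belowI[of _ 0]) (auto dest: sup_ent_set_pos less_imp_le)

lemma bdd_above_inf_ent_set: "process P \<Longrightarrow> bdd_above (inf_ent_set P)"
  using log_card_in_sup_ent_set inf_ent_set_less_sup_ent_set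
  by (metis bdd_above.I less_imp_le)

lemma sup_ent_le: "process P \<Longrightarrow> t \<in> sup_ent_set P \<Longrightarrow> sup_ent P \<le> t"
  unfolding sup_ent_eq_Inf by (rule cInf_lower[OF _ bdd_below_sup_ent_set])

lemma le_inf_ent: "process P \<Longrightarrow> t \<in> inf_ent_set P \<Longrightarrow> t \<le> inf_ent P"
  unfolding inf_ent_eq_Sup by (rule cSup_upper[OF _ bdd_above_inf_ent_set])

lemma sup_ent_add_in_sup_ent_set:
  assumes P: "process P" and g: "0 < g"
  shows "sup_ent P + g \<in> sup_ent_set P"
proof -
  have ne: "sup_ent_set P \<noteq> {}" using log_card_in_sup_ent_set[OF P] by blast
  have "Inf (sup_ent_set P) < Inf (sup_ent_set P) + g" using g by simp
  then obtain t where "t \<in> sup_ent_set P" "t < sup_ent P + g"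
    using cInf_less_iff[OF ne bdd_below_sup_ent_set[OF P]] unfolding sup_ent_eq_Inf by blast
  then show ?thesis using sup_ent_set_upclosed[OF P] by (meson less_imp_le)
qed

lemma less_inf_ent_in_inf_ent_set:
  assumes P: "process P" and t: "t < inf_ent P"
  shows "t \<in> inf_ent_set P"
proof -
  have ne: "inf_ent_set P \<noteq> {}" using neg_in_inf_ent_set[OF P] by blast
  obtain t' where "t' \<in> inf_ent_set P" "t < t'"
    using less_cSup_iff[OF ne bdd_above_inf_ent_set[OF P]] t unfolding inf_ent_eq_Sup by blast
  then show ?thesis using inf_ent_set_downclosed[OF P] by (meson less_imp_le)
qed

lemma sup_ent_nonneg: "process P \<Longrightarrow> 0 \<le> sup_ent P"
  using log_card_in_sup_ent_set sup_ent_set_pos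
  unfolding sup_ent_eq_Inf by (metis cInf_greatest empty_iff less_imp_le)

lemma inf_ent_le_sup_ent:
  assumes P: "process P"
  shows "inf_ent P \<le> sup_ent P"
  unfolding inf_ent_eq_Sup sup_ent_eq_Inf
proof (rule cSup_least)
  show "inf_ent_set P \<noteq> {}" using neg_in_inf_ent_set[OF P] by blast
  fix t assume "t \<in> inf_ent_set P"
  then show "t \<le> Inf (sup_ent_set P)"
    using log_card_in_sup_ent_set[OF P] inf_ent_set_less_sup_ent_set[OF P]
    by (intro cInf_greatest) (auto intro: less_imp_le)
qed

lemma tendsto_0_if_eventually_le_add3:
  fixes f :: "nat \<Rightarrow> real"
  assumes "eventually (\<lambda>n. 0 \<le> f n \<and> f n \<le> u n + v n + w n) sequentially"
    and "u \<longlonglongrightarrow> 0" "v \<longlonglongrightarrow> 0" "w \<longlonglongrightarrow> 0"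
  shows "f \<longlonglongrightarrow> 0"
proof (rule real_tendsto_sandwich[OF _ _ tendsto_const])
  show "(\<lambda>n. u n + v n + w n) \<longlonglongrightarrow> 0"
    using tendsto_add[OF tendsto_add[OF assms(2,3)] assms(4)] by simp
qed (use assms(1) in \<open>auto elim: eventually_mono\<close>)

section \<open>Leaves and stopping times of generation algorithms\<close>

lemma is_leaf_prefix_eq:
  assumes "is_leaf \<phi> s" "is_leaf \<phi> s'" "take (length s) s' = s"
  shows "s = s'"
proof -
  have "\<not> length s < length s'"
  proof
    assume "length s < length s'"
    then have "\<phi> (take (length s) s') = None" using assms(2) unfolding is_leaf_def by blast
    then show False using assms(1,3) unfolding is_leaf_def by simp
  qed
  moreover have "length s \<le> length s'"
    using arg_cong[OF assms(3), of length] by (simp add: min_def split: if_splits)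
  ultimately show ?thesis using assms(3) by simp
qed

lemma is_leaf_prefixes_eq:
  assumes "is_leaf \<phi> s" "is_leaf \<phi> s'" "take (length s) x = s" "take (length s') x = s'"
  shows "s = s'"
  using prefixes_comparable[OF assms(3,4)] is_leaf_prefix_eq[OF assms(1,2)] is_leaf_prefix_eq[OF assms(2,1)]
  by auto

lemma leaves_prefix_free:
  "F \<subseteq> {s. is_leaf \<phi> s} \<Longrightarrow> s \<in> F \<Longrightarrow> s' \<in> F \<Longrightarrow> take (length s) s' = s \<Longrightarrow> s = s'"
  using is_leaf_prefix_eq[of \<phi>] by blast

lemma exists_leaf_prefix:
  assumes "\<phi> (take i x) \<noteq> None"
  shows "\<exists>j\<le>i. is_leaf \<phi> (take j x)"
proof -
  define j where "j = (LEAST j. \<phi> (take j x) \<noteq> None)"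
  have "\<phi> (take j x) \<noteq> None" "j \<le> i"
    unfolding j_def using assms by (auto intro: LeastI Least_le)
  moreover have "\<phi> (take l x) = None" if "l < j" for l
    using not_less_Least[of l "\<lambda>j. \<phi> (take j x) \<noteq> None"] that unfolding j_def by blast
  ultimately have "is_leaf \<phi> (take j x)"
    unfolding is_leaf_def by (auto simp: min_def)
  then show ?thesis using \<open>j \<le> i\<close> by blast
qed

lemma sum_leaves_le_1:
  assumes P: "process P" and F: "finite F" "F \<subseteq> {s. is_leaf \<phi> s}"
  shows "(\<Sum>s\<in>F. P s) \<le> 1"
proof -
  obtain L where L: "\<And>s. s \<in> F \<Longrightarrow> length s \<le> L"
    using F by (metis finite_nat_set_iff_bounded_le finite_imageI image_eqI)
  have "(\<Sum>s\<in>F. P s) = prob_len P L (\<lambda>x. \<exists>s\<in>F. take (length s) x = s)"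
    unfolding prob_len_def
    by (rule sum_prefix_free[OF P F(1) L]) (use leaves_prefix_free[OF F(2)] in auto)
  also have "\<dots> \<le> 1" by (rule prob_len_le_1[OF P])
  finally show ?thesis .
qed

lemma summable_on_leaves:
  assumes P: "process P" and A: "A \<subseteq> {s. is_leaf \<phi> s}"
  shows "P summable_on A"
  using sum_leaves_le_1[OF P, of _ \<phi>] A
  by (intro nonneg_bdd_above_summable_on bdd_aboveI[of _ 1]) (auto simp: process_nonneg[OF P])

definition undecided :: "('a list \<Rightarrow> 'b list option) \<Rightarrow> nat \<Rightarrow> 'a list set" where
  "undecided \<phi> k = {u. length u = k \<and> (\<forall>i\<le>k. \<phi> (take i u) = None)}"

lemma prob_T_gt_eq_undecided: "prob_T_gt PX \<phi> r = (\<Sum>u\<in>undecided \<phi> (nat \<lfloor>r\<rfloor>). PX u)"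
proof -
  have "{s. length s = nat \<lfloor>r\<rfloor> \<and> (\<forall>i\<le>length s. \<phi> (take i s) = None)} = undecided \<phi> (nat \<lfloor>r\<rfloor>)"
    unfolding undecided_def by (rule Collect_cong) metis
  then show ?thesis unfolding prob_T_gt_def prob_len_def by simp
qed

lemma take_in_undecided:
  assumes "u \<in> undecided \<phi> k'" "k \<le> k'"
  shows "take k u \<in> undecided \<phi> k"
proof -
  have "length u = k'" "\<And>i. i \<le> k' \<Longrightarrow> \<phi> (take i u) = None"
    using assms(1) unfolding undecided_def by auto
  then show ?thesis unfolding undecided_def using assms(2) by (auto simp: min_def)
qed

lemma sum_undecided_antimono:
  assumes PX: "process PX" and kk: "k \<le> k'"
  shows "(\<Sum>u\<in>undecided \<phi> k'. PX u) \<le> (\<Sum>u\<in>undecided \<phi> k. PX u)"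
proof -
  have "(\<Sum>u\<in>undecided \<phi> k'. PX u) \<le> (\<Sum>x | length x = k' \<and> take k x \<in> undecided \<phi> k. PX x)"
    by (rule sum_mono2)
      (auto simp: finite_length_eq process_nonneg[OF PX] take_in_undecided[OF _ kk],
       simp add: undecided_def)
  also have "\<dots> = (\<Sum>u\<in>undecided \<phi> k. PX u)"
    by (rule sum_extensions_of_set[OF PX _ kk]) (simp add: undecided_def)
  finally show ?thesis .
qed

lemma achievable_mono:
  assumes PX: "process PX" and a: "achievable PX \<phi>s R" and RR: "R \<le> R'"
  shows "achievable PX \<phi>s R'"
proof -
  have "nat \<lfloor>real n * R\<rfloor> \<le> nat \<lfloor>real n * R'\<rfloor>" for n
    using RR by (intro nat_mono floor_mono) (simp add: mult_left_mono)
  then have le: "prob_T_gt PX (\<phi>s n) (real n * R') \<le> prob_T_gt PX (\<phi>s n) (real n * R)" for n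
    unfolding prob_T_gt_eq_undecided by (rule sum_undecided_antimono[OF PX])
  have "(\<lambda>n. prob_T_gt PX (\<phi>s n) (real n * R')) \<longlonglongrightarrow> 0"
  proof (rule real_tendsto_sandwich[OF _ _ tendsto_const])
    show "(\<lambda>n. prob_T_gt PX (\<phi>s n) (real n * R)) \<longlonglongrightarrow> 0"
      using a unfolding achievable_def by simp
    show "\<forall>\<^sub>F n in sequentially. 0 \<le> prob_T_gt PX (\<phi>s n) (real n * R')"
      unfolding prob_T_gt_eq_undecided by (simp add: sum_nonneg process_nonneg[OF PX])
  qed (use le in simp)
  then show ?thesis using a RR unfolding achievable_def by simp
qed

text \<open>
  For a target word y, the leaves with output y split into those of length at most k, whose
  extensions to length m \<ge> k are the early outputs, and the longer ones, which pass through
  undecided sequences of length k.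
\<close>
definition short_leaves :: "('a list \<Rightarrow> 'b list option) \<Rightarrow> nat \<Rightarrow> 'b list \<Rightarrow> 'a list set" where
  "short_leaves \<phi> k y = {s. is_leaf \<phi> s \<and> \<phi> s = Some y \<and> length s \<le> k}"

definition long_leaves :: "('a list \<Rightarrow> 'b list option) \<Rightarrow> nat \<Rightarrow> 'b list \<Rightarrow> 'a list set" where
  "long_leaves \<phi> k y = {s. is_leaf \<phi> s \<and> \<phi> s = Some y \<and> k < length s}"

definition early_output :: "('a list \<Rightarrow> 'b list option) \<Rightarrow> nat \<Rightarrow> nat \<Rightarrow> 'b list \<Rightarrow> 'a list set" where
  "early_output \<phi> k m y = {x. length x = m \<and> (\<exists>s\<in>short_leaves \<phi> k y. take (length s) x = s)}"

lemma finite_short_leaves: "finite (short_leaves (\<phi>::'a::finite list \<Rightarrow> 'b list option) k y)"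
  by (rule finite_subset[OF _ finite_length_le[of k]]) (auto simp: short_leaves_def)

lemma finite_early_output: "finite (early_output (\<phi>::'a::finite list \<Rightarrow> 'b list option) k m y)"
  unfolding early_output_def by (rule finite_length_eq)

lemma early_output_disjoint:
  assumes "y \<noteq> y'"
  shows "early_output \<phi> k m y \<inter> early_output \<phi> k m y' = {}"
proof -
  have False if "s \<in> short_leaves \<phi> k y" "s' \<in> short_leaves \<phi> k y'"
      "take (length s) x = s" "take (length s') x = s'" for s s' x
    using that is_leaf_prefixes_eq[of \<phi> s s' x] assms by (auto simp: short_leaves_def)
  then show ?thesis unfolding early_output_def by blast
qed

lemma sum_long_leaves_le_undecided:
  assumes PX: "process PX" and F: "finite F" "F \<subseteq> {s. is_leaf \<phi> s \<and> k < length s}"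
  shows "(\<Sum>s\<in>F. PX s) \<le> (\<Sum>u\<in>undecided \<phi> k. PX u)"
proof -
  obtain L0 where L0: "\<And>s. s \<in> F \<Longrightarrow> length s \<le> L0"
    using F by (metis finite_nat_set_iff_bounded_le finite_imageI image_eqI)
  define L where "L = max L0 k"
  have L: "\<And>s. s \<in> F \<Longrightarrow> length s \<le> L" "k \<le> L" using L0 unfolding L_def by force+
  have undec: "take k x \<in> undecided \<phi> k"
    if "length x = L" "s \<in> F" "take (length s) x = s" for x s
  proof -
    have s: "is_leaf \<phi> s" "k < length s" using that(2) F(2) by auto
    have tk: "take k x = take k s" using that(3) s(2) by (metis min.absorb1 less_imp_le take_take)
    have "\<phi> (take i (take k x)) = None" if "i \<le> k" for i
      using s that unfolding tk is_leaf_def by (simp add: min_def)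
    moreover have "length (take k x) = k" using that(1) L(2) by simp
    ultimately show ?thesis unfolding undecided_def by simp
  qed
  have leaves: "F \<subseteq> {s. is_leaf \<phi> s}" using F(2) by auto
  have "(\<Sum>s\<in>F. PX s) = (\<Sum>x | length x = L \<and> (\<exists>s\<in>F. take (length s) x = s). PX x)"
    by (rule sum_prefix_free[OF PX F(1) L(1)]) (use leaves_prefix_free[OF leaves] in auto)
  also have "\<dots> \<le> (\<Sum>x | length x = L \<and> take k x \<in> undecided \<phi> k. PX x)"
    by (rule sum_mono2) (auto simp: finite_length_eq process_nonneg[OF PX] undec)
  also have "\<dots> = (\<Sum>u\<in>undecided \<phi> k. PX u)"
    by (rule sum_extensions_of_set[OF PX _ L(2)]) (simp add: undecided_def)
  finally show ?thesis .
qed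

lemma valid_alg_split:
  assumes PX: "process PX" and V: "valid_alg PX PY n \<phi>" and y: "length y = n" and km: "k \<le> m"
  shows "PY y = (\<Sum>x\<in>early_output \<phi> k m y. PX x) + infsum PX (long_leaves \<phi> k y)"
proof -
  have "PY y = infsum PX {s. is_leaf \<phi> s \<and> \<phi> s = Some y}"
    using V y unfolding valid_alg_def by simp
  also have "{s. is_leaf \<phi> s \<and> \<phi> s = Some y} = short_leaves \<phi> k y \<union> long_leaves \<phi> k y"
    by (auto simp: short_leaves_def long_leaves_def)
  also have "infsum PX \<dots> = infsum PX (short_leaves \<phi> k y) + infsum PX (long_leaves \<phi> k y)"
    by (rule infsum_Un_disjoint)
      (auto simp: short_leaves_def long_leaves_def intro!: summable_on_leaves[OF PX])
  also have "infsum PX (short_leaves \<phi> k y) = (\<Sum>s\<in>short_leaves \<phi> k y. PX s)"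
    by (simp add: finite_short_leaves)
  also have "\<dots> = (\<Sum>x\<in>early_output \<phi> k m y. PX x)"
    unfolding early_output_def
    by (rule sum_prefix_free[OF PX finite_short_leaves])
      (use km is_leaf_prefix_eq in \<open>auto simp: short_leaves_def\<close>)
  finally show ?thesis .
qed

lemma sum_early_output_le:
  assumes PX: "process PX" and V: "valid_alg PX PY n \<phi>" and y: "length y = n" and km: "k \<le> m"
  shows "(\<Sum>x\<in>A \<inter> early_output \<phi> k m y. PX x) \<le> PY y"
proof -
  have "(\<Sum>x\<in>A \<inter> early_output \<phi> k m y. PX x) \<le> (\<Sum>x\<in>early_output \<phi> k m y. PX x)"
    by (rule sum_mono2) (auto simp: finite_early_output process_nonneg[OF PX])
  also have "\<dots> \<le> PY y"
    using valid_alg_split[OF assms] infsum_nonneg[of "long_leaves \<phi> k y" PX]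
    by (simp add: process_nonneg[OF PX])
  finally show ?thesis .
qed

lemma sum_long_leaves_le:
  assumes PX: "process PX" and S: "finite S"
  shows "(\<Sum>y\<in>S. infsum PX (long_leaves \<phi> k y)) \<le> (\<Sum>u\<in>undecided \<phi> k. PX u)"
proof -
  have "(\<Sum>y\<in>S. infsum PX (long_leaves \<phi> k y)) = infsum PX (\<Union>y\<in>S. long_leaves \<phi> k y)"
  proof (rule sum_infsum[OF S])
    show "PX summable_on long_leaves \<phi> k y" for y
      by (rule summable_on_leaves[OF PX, where \<phi>=\<phi>]) (auto simp: long_leaves_def)
    show "long_leaves \<phi> k y \<inter> long_leaves \<phi> k y' = {}" if "y \<noteq> y'" for y y'
      using that by (auto simp: long_leaves_def)
  qed
  also have "\<dots> \<le> (\<Sum>u\<in>undecided \<phi> k. PX u)"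
  proof (rule infsum_le_finite_sums)
    show "PX summable_on (\<Union>y\<in>S. long_leaves \<phi> k y)"
      by (rule summable_on_leaves[OF PX, where \<phi>=\<phi>]) (unfold long_leaves_def, blast)
    fix F assume F: "finite F" "F \<subseteq> (\<Union>y\<in>S. long_leaves \<phi> k y)"
    then have "F \<subseteq> {s. is_leaf \<phi> s \<and> k < length s}" by (auto simp: long_leaves_def)
    then show "sum PX F \<le> (\<Sum>u\<in>undecided \<phi> k. PX u)"
      by (rule sum_long_leaves_le_undecided[OF PX F(1)])
  qed
  finally show ?thesis .
qed

lemma undecided_if_no_early_output:
  assumes V: "valid_alg PX PY n \<phi>" and x: "length x = m" and km: "k \<le> m"
    and no: "\<And>y. length y = n \<Longrightarrow> x \<notin> early_output \<phi> k m y"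
  shows "take k x \<in> undecided \<phi> k"
proof -
  have "\<phi> (take i x) = None" if i: "i \<le> k" for i
  proof (rule ccontr)
    assume "\<phi> (take i x) \<noteq> None"
    then obtain j where j: "j \<le> i" "is_leaf \<phi> (take j x)" using exists_leaf_prefix by blast
    then obtain y where y: "\<phi> (take j x) = Some y" unfolding is_leaf_def by blast
    have "length (take j x) = j" using j(1) i km x by simp
    then have "take j x \<in> short_leaves \<phi> k y" "take (length (take j x)) x = take j x"
      unfolding short_leaves_def using j y i by simp_all
    then have "x \<in> early_output \<phi> k m y"
      unfolding early_output_def using x by blast
    moreover have "length y = n" using V y unfolding valid_alg_def by simp
    ultimately show False using no by blast
  qed
  then show ?thesis unfolding undecided_def using x km by (simp add: min_def)
qed

text \<open>
  Each target word of probability at most e receives at most e of the mass of the early outputs,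
  and by disjointness at most |G| target words meet a set G of coin sequences.
\<close>
lemma sum_early_output_light_le:
  assumes PX: "process PX" and V: "valid_alg PX PY n \<phi>" and km: "k \<le> m"
    and T: "T \<subseteq> {y. length y = n}" "finite T" and Te: "\<And>y. y \<in> T \<Longrightarrow> PY y \<le> e"
    and G: "finite G" and e0: "0 \<le> e"
  shows "(\<Sum>y\<in>T. \<Sum>x\<in>G \<inter> early_output \<phi> k m y. PX x) \<le> real (card G) * e"
proof -
  let ?T' = "{y\<in>T. G \<inter> early_output \<phi> k m y \<noteq> {}}"
  have "(\<Sum>y\<in>T. \<Sum>x\<in>G \<inter> early_output \<phi> k m y. PX x) = (\<Sum>y\<in>?T'. \<Sum>x\<in>G \<inter> early_output \<phi> k m y. PX x)"
    by (rule sum.mono_neutral_right) (use T(2) in auto)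
  also have "\<dots> \<le> (\<Sum>y\<in>?T'. e)"
  proof (rule sum_mono)
    fix y assume y: "y \<in> ?T'"
    then have "(\<Sum>x\<in>G \<inter> early_output \<phi> k m y. PX x) \<le> PY y"
      using T(1) by (intro sum_early_output_le[OF PX V _ km]) auto
    also have "PY y \<le> e" using y Te by simp
    finally show "(\<Sum>x\<in>G \<inter> early_output \<phi> k m y. PX x) \<le> e" .
  qed
  also have "\<dots> \<le> real (card G) * e"
  proof -
    define f where "f y = (SOME x. x \<in> G \<inter> early_output \<phi> k m y)" for y
    have f: "f y \<in> G \<inter> early_output \<phi> k m y" if "y \<in> ?T'" for y
      unfolding f_def by (rule someI_ex) (use that in blast)
    have "inj_on f ?T'"
    proof (rule inj_onI, rule ccontr)
      fix y y' assume y: "y \<in> ?T'" "y' \<in> ?T'" "f y = f y'" "y \<noteq> y'"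
      have "f y \<in> early_output \<phi> k m y" "f y \<in> early_output \<phi> k m y'"
        using f[OF y(1)] f[OF y(2)] y(3) by simp_all
      then show False using early_output_disjoint[OF y(4)] by blast
    qed
    moreover have "f ` ?T' \<subseteq> G"
      using f by (simp add: image_subset_iff)
    ultimately have "card ?T' \<le> card G" by (rule card_inj_on_le[OF _ _ G])
    then show ?thesis using e0 by (simp add: mult_right_mono)
  qed
  finally show ?thesis .
qed

lemma target_light_mass_le:
  assumes PX: "process PX" and V: "valid_alg PX PY n \<phi>" and km: "k \<le> m"
    and S: "S \<subseteq> {y. length y = n}" and Se: "\<And>y. y \<in> S \<Longrightarrow> PY y \<le> e"
    and G: "G \<subseteq> {x. length x = m}" and e0: "0 \<le> e"
  shows "(\<Sum>y\<in>S. PY y) \<le> (\<Sum>u\<in>undecided \<phi> k. PX u) + prob_len PX m (\<lambda>x. x \<notin> G) + real (card G) * e"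
proof -
  have fS: "finite S" by (rule finite_subset[OF S finite_length_eq[where Q="\<lambda>_. True", simplified]])
  have fG: "finite G" by (rule finite_subset[OF G finite_length_eq[where Q="\<lambda>_. True", simplified]])
  have split: "(\<Sum>x\<in>early_output \<phi> k m y. PX x)
      = (\<Sum>x\<in>G \<inter> early_output \<phi> k m y. PX x) + (\<Sum>x\<in>early_output \<phi> k m y - G. PX x)" for y
    using sum.Int_Diff[OF finite_early_output, of PX \<phi> k m y G] by (simp add: Int_commute)
  have "(\<Sum>y\<in>S. PY y) = (\<Sum>y\<in>S. (\<Sum>x\<in>G \<inter> early_output \<phi> k m y. PX x)
      + (\<Sum>x\<in>early_output \<phi> k m y - G. PX x) + infsum PX (long_leaves \<phi> k y))"
    using valid_alg_split[OF PX V _ km] S by (intro sum.cong) (auto simp: split)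
  also have "\<dots> = (\<Sum>y\<in>S. \<Sum>x\<in>G \<inter> early_output \<phi> k m y. PX x)
      + (\<Sum>y\<in>S. \<Sum>x\<in>early_output \<phi> k m y - G. PX x) + (\<Sum>y\<in>S. infsum PX (long_leaves \<phi> k y))"
    by (simp add: sum.distrib)
  also have "(\<Sum>y\<in>S. \<Sum>x\<in>G \<inter> early_output \<phi> k m y. PX x) \<le> real (card G) * e"
    by (rule sum_early_output_light_le[OF PX V km S fS Se fG e0])
  also have "(\<Sum>y\<in>S. \<Sum>x\<in>early_output \<phi> k m y - G. PX x) = (\<Sum>x\<in>(\<Union>y\<in>S. early_output \<phi> k m y - G). PX x)"
    by (rule sum.UNION_disjoint[symmetric, OF fS]) (use finite_early_output early_output_disjoint in blast)+
  also have "\<dots> \<le> prob_len PX m (\<lambda>x. x \<notin> G)"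
    unfolding prob_len_def
    by (rule sum_mono2) (auto simp: finite_length_eq process_nonneg[OF PX] early_output_def)
  also have "(\<Sum>y\<in>S. infsum PX (long_leaves \<phi> k y)) \<le> (\<Sum>u\<in>undecided \<phi> k. PX u)"
    by (rule sum_long_leaves_le[OF PX fS])
  finally show ?thesis by linarith
qed

lemma sum_le_undecided_add_early_output:
  fixes PY :: "'b::finite list \<Rightarrow> real"
  assumes PX: "process PX" and V: "valid_alg PX PY n \<phi>" and km: "k \<le> m"
    and G: "G \<subseteq> {x. length x = m}"
  shows "(\<Sum>x\<in>G. PX x) \<le> (\<Sum>u\<in>undecided \<phi> k. PX u)
           + (\<Sum>y | length y = n. \<Sum>x\<in>G \<inter> early_output \<phi> k m y. PX x)"
proof -
  define Yn where "Yn = {y::'b list. length y = n}"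
  have fG: "finite G" by (rule finite_subset[OF G finite_length_eq[where Q="\<lambda>_. True", simplified]])
  have fYn: "finite Yn" unfolding Yn_def by (rule finite_length_eq[where Q="\<lambda>_. True", simplified])
  define W where "W = {x. take k x \<in> undecided \<phi> k}"
  have "(\<Sum>x\<in>G. PX x) = (\<Sum>x\<in>G \<inter> W. PX x) + (\<Sum>x\<in>G - W. PX x)"
    by (rule sum.Int_Diff[OF fG])
  also have "(\<Sum>x\<in>G \<inter> W. PX x) \<le> (\<Sum>x | length x = m \<and> take k x \<in> undecided \<phi> k. PX x)"
    by (rule sum_mono2) (use G in \<open>auto simp: W_def finite_length_eq process_nonneg[OF PX]\<close>)
  also have "\<dots> = (\<Sum>u\<in>undecided \<phi> k. PX u)"
    by (rule sum_extensions_of_set[OF PX _ km]) (simp add: undecided_def)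
  also have "G - W \<subseteq> (\<Union>y\<in>Yn. G \<inter> early_output \<phi> k m y)"
  proof
    fix x assume x: "x \<in> G - W"
    then have "length x = m" using G by blast
    then obtain y where "length y = n" "x \<in> early_output \<phi> k m y"
      using undecided_if_no_early_output[OF V _ km] x unfolding W_def by blast
    then show "x \<in> (\<Union>y\<in>Yn. G \<inter> early_output \<phi> k m y)" using x unfolding Yn_def by blast
  qed
  then have "(\<Sum>x\<in>G - W. PX x) \<le> (\<Sum>x\<in>(\<Union>y\<in>Yn. G \<inter> early_output \<phi> k m y). PX x)"
    by (rule sum_mono2[rotated]) (use fYn fG in \<open>auto simp: process_nonneg[OF PX]\<close>)
  also have "\<dots> = (\<Sum>y\<in>Yn. \<Sum>x\<in>G \<inter> early_output \<phi> k m y. PX x)"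
  proof (rule sum.UNION_disjoint[OF fYn])
    show "\<forall>y\<in>Yn. finite (G \<inter> early_output \<phi> k m y)" using fG by blast
    show "\<forall>y\<in>Yn. \<forall>y'\<in>Yn. y \<noteq> y' \<longrightarrow> (G \<inter> early_output \<phi> k m y) \<inter> (G \<inter> early_output \<phi> k m y') = {}"
      using early_output_disjoint by blast
  qed
  finally show ?thesis unfolding Yn_def by simp
qed

lemma coin_heavy_mass_le:
  fixes PY :: "'b::finite list \<Rightarrow> real"
  assumes PX: "process PX" and V: "valid_alg PX PY n \<phi>" and km: "k \<le> m"
    and S: "S \<subseteq> {y. length y = n}" and Se: "\<And>y. y \<in> S \<Longrightarrow> PY y \<le> e"
    and G: "G \<subseteq> {x. length x = m}" and e0: "0 \<le> e"
  shows "(\<Sum>x\<in>G. PX x) \<le> (\<Sum>u\<in>undecided \<phi> k. PX u) + prob_len PY n (\<lambda>y. y \<notin> S) + real (card G) * e"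
proof -
  define Yn where "Yn = {y::'b list. length y = n}"
  have fS: "finite S" by (rule finite_subset[OF S finite_length_eq[where Q="\<lambda>_. True", simplified]])
  have fG: "finite G" by (rule finite_subset[OF G finite_length_eq[where Q="\<lambda>_. True", simplified]])
  have fYn: "finite Yn" unfolding Yn_def by (rule finite_length_eq[where Q="\<lambda>_. True", simplified])
  have "(\<Sum>x\<in>G. PX x) \<le> (\<Sum>u\<in>undecided \<phi> k. PX u) + (\<Sum>y\<in>Yn. \<Sum>x\<in>G \<inter> early_output \<phi> k m y. PX x)"
    unfolding Yn_def by (rule sum_le_undecided_add_early_output[OF PX V km G])
  also have "(\<Sum>y\<in>Yn. \<Sum>x\<in>G \<inter> early_output \<phi> k m y. PX x) = (\<Sum>y\<in>S. \<Sum>x\<in>G \<inter> early_output \<phi> k m y. PX x)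
      + (\<Sum>y\<in>Yn - S. \<Sum>x\<in>G \<inter> early_output \<phi> k m y. PX x)"
  proof -
    have "Yn \<inter> S = S" using S unfolding Yn_def by blast
    then show ?thesis using sum.Int_Diff[OF fYn, of _ S] by metis
  qed
  also have "(\<Sum>y\<in>S. \<Sum>x\<in>G \<inter> early_output \<phi> k m y. PX x) \<le> real (card G) * e"
    by (rule sum_early_output_light_le[OF PX V km S fS Se fG e0])
  also have "(\<Sum>y\<in>Yn - S. \<Sum>x\<in>G \<inter> early_output \<phi> k m y. PX x) \<le> (\<Sum>y\<in>Yn - S. PY y)"
    by (rule sum_mono, rule sum_early_output_le[OF PX V _ km]) (simp add: Yn_def)
  also have "\<dots> = prob_len PY n (\<lambda>y. y \<notin> S)"
    unfolding prob_len_def Yn_def by (rule sum.cong) auto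
  finally show ?thesis by linarith
qed

section \<open>The converse\<close>

lemma real_nat_floor_bounds:
  assumes "0 \<le> x"
  shows "real (nat \<lfloor>x\<rfloor>) \<le> x" "x - 1 \<le> real (nat \<lfloor>x\<rfloor>)"
proof -
  have "real (nat \<lfloor>x\<rfloor>) = of_int \<lfloor>x\<rfloor>" using assms by simp
  then show "real (nat \<lfloor>x\<rfloor>) \<le> x" "x - 1 \<le> real (nat \<lfloor>x\<rfloor>)" by linarith+
qed

lemma target_info_tail_le:
  fixes PX :: "'a::finite list \<Rightarrow> real" and PY :: "'b::finite list \<Rightarrow> real"
  assumes PX: "process PX" and PY: "process PY" and V: "valid_alg PX PY n \<phi>"
    and n: "0 < n" and m: "0 < m"
  shows "prob_len PY n (\<lambda>s. a \<le> info_rate PY n s) \<le> (\<Sum>u\<in>undecided \<phi> m. PX u)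
           + prob_len PX m (\<lambda>s. b \<le> info_rate PX m s) + 2 powr (real m * b - real n * a)"
proof -
  define G where "G = {x. length x = m \<and> 2 powr (- (real m * b)) \<le> PX x}"
  define S where "S = {y. length y = n \<and> PY y \<le> 2 powr (- (real n * a))}"
  have "prob_len PY n (\<lambda>s. a \<le> info_rate PY n s) = (\<Sum>y\<in>S. PY y)"
    using prob_len_info_rate_ge[OF PY n, of a] unfolding prob_len_def S_def by simp
  also have "\<dots> \<le> (\<Sum>u\<in>undecided \<phi> m. PX u) + prob_len PX m (\<lambda>x. x \<notin> G)
      + real (card G) * 2 powr (- (real n * a))"
    by (rule target_light_mass_le[OF PX V order_refl]) (auto simp: S_def G_def)
  also have "prob_len PX m (\<lambda>x. x \<notin> G) \<le> prob_len PX m (\<lambda>s. b \<le> info_rate PX m s)"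
    unfolding prob_len_info_rate_ge[OF PX m] by (rule prob_len_mono[OF PX]) (auto simp: G_def)
  also have "real (card G) * 2 powr (- (real n * a)) \<le> 2 powr (real m * b) * 2 powr (- (real n * a))"
    unfolding G_def by (rule mult_right_mono[OF card_heavy_le[OF PX]]) simp
  finally show ?thesis by (simp add: powr_add[symmetric])
qed

lemma coin_info_tail_le:
  fixes PX :: "'a::finite list \<Rightarrow> real" and PY :: "'b::finite list \<Rightarrow> real"
  assumes PX: "process PX" and PY: "process PY" and V: "valid_alg PX PY n \<phi>"
    and n: "0 < n" and m: "0 < m" and km: "k \<le> m"
  shows "prob_len PX m (\<lambda>s. info_rate PX m s \<le> b) \<le> (\<Sum>u\<in>undecided \<phi> k. PX u)
           + prob_len PY n (\<lambda>s. info_rate PY n s \<le> a) + 2 powr (real m * b - real n * a)"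
proof -
  define G where "G = {x. length x = m \<and> 2 powr (- (real m * b)) \<le> PX x}"
  define S where "S = {y. length y = n \<and> PY y \<le> 2 powr (- (real n * a))}"
  have "prob_len PX m (\<lambda>s. info_rate PX m s \<le> b) = (\<Sum>x\<in>G. PX x)"
    using prob_len_info_rate_le[OF PX m, of b] unfolding prob_len_def G_def by simp
  also have "\<dots> \<le> (\<Sum>u\<in>undecided \<phi> k. PX u) + prob_len PY n (\<lambda>y. y \<notin> S)
      + real (card G) * 2 powr (- (real n * a))"
    by (rule coin_heavy_mass_le[OF PX V km]) (auto simp: S_def G_def)
  also have "prob_len PY n (\<lambda>y. y \<notin> S) \<le> prob_len PY n (\<lambda>s. info_rate PY n s \<le> a)"
    unfolding prob_len_info_rate_le[OF PY n] by (rule prob_len_mono[OF PY]) (auto simp: S_def)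
  also have "real (card G) * 2 powr (- (real n * a)) \<le> 2 powr (real m * b) * 2 powr (- (real n * a))"
    unfolding G_def by (rule mult_right_mono[OF card_heavy_le[OF PX]]) simp
  finally show ?thesis by (simp add: powr_add[symmetric])
qed

lemma sup_ent_set_converse:
  fixes PX :: "'a::finite list \<Rightarrow> real" and PY :: "'b::finite list \<Rightarrow> real"
  assumes PX: "process PX" and PY: "process PY"
    and V: "\<And>n. 1 \<le> n \<Longrightarrow> valid_alg PX PY n (\<phi>s n)" and R: "0 < R"
    and lim: "(\<lambda>n. prob_T_gt PX (\<phi>s n) (real n * R)) \<longlonglongrightarrow> 0"
    and b: "b \<in> sup_ent_set PX" and ab: "R * b < a"
  shows "a \<in> sup_ent_set PY"
proof -
  define g where "g = a - R * b"
  have g: "0 < g" using ab unfolding g_def by simp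
  define m where "m n = nat \<lfloor>real n * R\<rfloor>" for n
  have m_lim: "filterlim m at_top sequentially" unfolding m_def using R by real_asymp
  have exponent: "2 powr (real (m n) * b - real n * a) \<le> 2 powr (- (real n * g))" for n
  proof -
    have "real (m n) * b \<le> real n * R * b"
      unfolding m_def using R sup_ent_set_pos[OF PX b] by (simp add: real_nat_floor_bounds)
    then show ?thesis unfolding g_def by (simp add: algebra_simps)
  qed
  have key: "prob_len PY n (\<lambda>s. a \<le> info_rate PY n s) \<le> prob_T_gt PX (\<phi>s n) (real n * R)
      + prob_len PX (m n) (\<lambda>s. b \<le> info_rate PX (m n) s) + 2 powr (- (real n * g))"
    if "1 \<le> n" "1 \<le> m n" for n
  proof -
    have "prob_len PY n (\<lambda>s. a \<le> info_rate PY n s) \<le> (\<Sum>u\<in>undecided (\<phi>s n) (m n). PX u)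
        + prob_len PX (m n) (\<lambda>s. b \<le> info_rate PX (m n) s) + 2 powr (real (m n) * b - real n * a)"
      using that by (intro target_info_tail_le[OF PX PY V]) simp_all
    then show ?thesis using exponent[of n] unfolding prob_T_gt_eq_undecided m_def by linarith
  qed
  have "(\<lambda>n. prob_len PY n (\<lambda>s. a \<le> info_rate PY n s)) \<longlonglongrightarrow> 0"
  proof (rule tendsto_0_if_eventually_le_add3[OF _ lim])
    have "eventually (\<lambda>n. 1 \<le> m n) sequentially" using m_lim by (simp add: filterlim_at_top)
    then show "eventually (\<lambda>n. 0 \<le> prob_len PY n (\<lambda>s. a \<le> info_rate PY n s)
        \<and> prob_len PY n (\<lambda>s. a \<le> info_rate PY n s) \<le> prob_T_gt PX (\<phi>s n) (real n * R)
          + prob_len PX (m n) (\<lambda>s. b \<le> info_rate PX (m n) s) + 2 powr (- (real n * g))) sequentially"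
      using eventually_ge_at_top[of 1] by eventually_elim (simp add: key prob_len_nonneg[OF PY])
    show "(\<lambda>n. prob_len PX (m n) (\<lambda>s. b \<le> info_rate PX (m n) s)) \<longlonglongrightarrow> 0"
      using filterlim_compose[OF _ m_lim] b unfolding sup_ent_set_def by blast
    show "(\<lambda>n. 2 powr (- (real n * g))) \<longlonglongrightarrow> 0" using g by real_asymp
  qed
  then show ?thesis unfolding sup_ent_set_def by simp
qed

lemma inf_ent_set_converse:
  fixes PX :: "'a::finite list \<Rightarrow> real" and PY :: "'b::finite list \<Rightarrow> real"
  assumes PX: "process PX" and PY: "process PY"
    and V: "\<And>n. 1 \<le> n \<Longrightarrow> valid_alg PX PY n (\<phi>s n)" and R: "0 < R"
    and lim: "(\<lambda>n. prob_T_gt PX (\<phi>s n) (real n * R)) \<longlonglongrightarrow> 0"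
    and a: "a \<in> inf_ent_set PY" and b0: "0 < b" and ab: "R * b < a"
  shows "b \<in> inf_ent_set PX"
proof -
  define g where "g = a / R - b"
  have g: "0 < g" using ab R unfolding g_def by (simp add: field_simps)
  text \<open>Coin sequences of length m are compared with target words of length n = m / R.\<close>
  define n where "n m = nat \<lfloor>real m / R\<rfloor>" for m
  define k where "k m = nat \<lfloor>real (n m) * R\<rfloor>" for m
  have n_lim: "filterlim n at_top sequentially" unfolding n_def using R by real_asymp
  have km: "k m \<le> m" for m
  proof -
    have "real (n m) \<le> real m / R" unfolding n_def using R by (simp add: real_nat_floor_bounds)
    then have "real (n m) * R \<le> real m" using R by (simp add: field_simps)
    then show ?thesis unfolding k_def by linarith
  qed
  have exponent: "2 powr (real m * b - real (n m) * a) \<le> 2 powr a * 2 powr (- (real m * g))" for m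
  proof -
    have "(real m / R - 1) * a \<le> real (n m) * a"
      unfolding n_def using R mult_pos_pos[OF R b0] ab
      by (intro mult_right_mono) (simp_all add: real_nat_floor_bounds)
    then have "real m * b - real (n m) * a \<le> a + - (real m * g)"
      using R unfolding g_def by (simp add: field_simps)
    then show ?thesis unfolding powr_add[symmetric] by simp
  qed
  have key: "prob_len PX m (\<lambda>s. info_rate PX m s \<le> b) \<le> prob_T_gt PX (\<phi>s (n m)) (real (n m) * R)
      + prob_len PY (n m) (\<lambda>s. info_rate PY (n m) s \<le> a) + 2 powr a * 2 powr (- (real m * g))"
    if "1 \<le> m" "1 \<le> n m" for m
  proof -
    have "prob_len PX m (\<lambda>s. info_rate PX m s \<le> b) \<le> (\<Sum>u\<in>undecided (\<phi>s (n m)) (k m). PX u)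
        + prob_len PY (n m) (\<lambda>s. info_rate PY (n m) s \<le> a) + 2 powr (real m * b - real (n m) * a)"
      using that by (intro coin_info_tail_le[OF PX PY V _ _ km]) simp_all
    then show ?thesis using exponent[of m] unfolding prob_T_gt_eq_undecided k_def by linarith
  qed
  have "(\<lambda>m. prob_len PX m (\<lambda>s. info_rate PX m s \<le> b)) \<longlonglongrightarrow> 0"
  proof (rule tendsto_0_if_eventually_le_add3)
    have "eventually (\<lambda>m. 1 \<le> n m) sequentially" using n_lim by (simp add: filterlim_at_top)
    then show "eventually (\<lambda>m. 0 \<le> prob_len PX m (\<lambda>s. info_rate PX m s \<le> b)
        \<and> prob_len PX m (\<lambda>s. info_rate PX m s \<le> b) \<le> prob_T_gt PX (\<phi>s (n m)) (real (n m) * R)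
          + prob_len PY (n m) (\<lambda>s. info_rate PY (n m) s \<le> a) + 2 powr a * 2 powr (- (real m * g)))
        sequentially"
      using eventually_ge_at_top[of 1] by eventually_elim (simp add: key prob_len_nonneg[OF PX])
    show "(\<lambda>m. prob_T_gt PX (\<phi>s (n m)) (real (n m) * R)) \<longlonglongrightarrow> 0"
      using filterlim_compose[OF lim n_lim] .
    show "(\<lambda>m. prob_len PY (n m) (\<lambda>s. info_rate PY (n m) s \<le> a)) \<longlonglongrightarrow> 0"
      using filterlim_compose[OF _ n_lim] a unfolding inf_ent_set_def by blast
    show "(\<lambda>m. 2 powr a * 2 powr (- (real m * g))) \<longlonglongrightarrow> 0" using g by real_asymp
  qed
  then show ?thesis unfolding inf_ent_set_def by simp
qed

lemma sup_ent_le_rate_mult: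
  fixes PX :: "'a::finite list \<Rightarrow> real" and PY :: "'b::finite list \<Rightarrow> real"
  assumes PX: "process PX" and PY: "process PY"
    and V: "\<And>n. 1 \<le> n \<Longrightarrow> valid_alg PX PY n (\<phi>s n)" and R: "0 < R"
    and lim: "(\<lambda>n. prob_T_gt PX (\<phi>s n) (real n * R)) \<longlonglongrightarrow> 0"
  shows "sup_ent PY \<le> R * sup_ent PX"
proof (rule field_le_epsilon)
  fix e :: real assume e: "0 < e"
  define d where "d = e / (R + 1)"
  have d: "0 < d" using e R unfolding d_def by simp
  have "sup_ent PX + d \<in> sup_ent_set PX" by (rule sup_ent_add_in_sup_ent_set[OF PX d])
  then have "R * (sup_ent PX + d) + d \<in> sup_ent_set PY"
    using sup_ent_set_converse[OF PX PY V R lim] d by simp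
  then have "sup_ent PY \<le> R * (sup_ent PX + d) + d" by (rule sup_ent_le[OF PY])
  also have "\<dots> = R * sup_ent PX + (R + 1) * d" by (simp add: algebra_simps)
  also have "(R + 1) * d = e" using R unfolding d_def by simp
  finally show "sup_ent PY \<le> R * sup_ent PX + e" .
qed

lemma inf_ent_le_rate_mult:
  fixes PX :: "'a::finite list \<Rightarrow> real" and PY :: "'b::finite list \<Rightarrow> real"
  assumes PX: "process PX" and PY: "process PY"
    and V: "\<And>n. 1 \<le> n \<Longrightarrow> valid_alg PX PY n (\<phi>s n)" and R: "0 < R"
    and lim: "(\<lambda>n. prob_T_gt PX (\<phi>s n) (real n * R)) \<longlonglongrightarrow> 0"
    and hx: "0 < inf_ent PX"
  shows "inf_ent PY \<le> R * inf_ent PX"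
proof (rule field_le_epsilon)
  fix e :: real assume e: "0 < e"
  define d where "d = e / (R + 1)"
  have d: "0 < d" using e R unfolding d_def by simp
  have "(R + 1) * d = e" using R unfolding d_def by simp
  then have eq: "R * (inf_ent PX + d) + d = R * inf_ent PX + e" by (simp add: algebra_simps)
  show "inf_ent PY \<le> R * inf_ent PX + e"
  proof (rule ccontr)
    assume "\<not> ?thesis"
    then have "R * (inf_ent PX + d) + d \<in> inf_ent_set PY"
      unfolding eq by (intro less_inf_ent_in_inf_ent_set[OF PY]) simp
    then have "inf_ent PX + d \<in> inf_ent_set PX"
      using inf_ent_set_converse[OF PX PY V R lim] hx d by simp
    then show False using le_inf_ent[OF PX] d by fastforce
  qed
qed

lemma R_star_lower:
  fixes PX :: "'a::finite list \<Rightarrow> real" and PY :: "'b::finite list \<Rightarrow> real"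
  assumes PX: "process PX" and PY: "process PY" and hx: "0 < inf_ent PX"
  shows "ereal (max (sup_ent PY / sup_ent PX) (inf_ent PY / inf_ent PX)) \<le> R_star PX PY"
  unfolding R_star_def
proof (rule Inf_greatest, clarify)
  fix R \<phi>s assume V: "\<forall>n\<ge>1. valid_alg PX PY n (\<phi>s n)" and a: "achievable PX \<phi>s R"
  have hX: "0 < sup_ent PX" using inf_ent_le_sup_ent[OF PX] hx by simp
  have "sup_ent PY / sup_ent PX \<le> R + e \<and> inf_ent PY / inf_ent PX \<le> R + e" if e: "0 < e" for e
  proof -
    have "achievable PX \<phi>s (R + e)" by (rule achievable_mono[OF PX a]) (use e in simp)
    then have Re: "0 < R + e" and lim: "(\<lambda>n. prob_T_gt PX (\<phi>s n) (real n * (R + e))) \<longlonglongrightarrow> 0"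
      using a e unfolding achievable_def by auto
    have "sup_ent PY \<le> (R + e) * sup_ent PX" by (rule sup_ent_le_rate_mult[OF PX PY _ Re lim]) (use V in simp)
    moreover have "inf_ent PY \<le> (R + e) * inf_ent PX"
      by (rule inf_ent_le_rate_mult[OF PX PY _ Re lim hx]) (use V in simp)
    ultimately show ?thesis using hX hx by (simp add: divide_le_eq)
  qed
  then have "sup_ent PY / sup_ent PX \<le> R" "inf_ent PY / inf_ent PX \<le> R"
    by (auto intro: field_le_epsilon)
  then show "ereal (max (sup_ent PY / sup_ent PX) (inf_ent PY / inf_ent PX)) \<le> ereal R" by simp
qed

section \<open>The interval algorithm\<close>

lemma interval_aux_snoc:
  "interval_aux P pre (l, h) (xs @ [x]) =
     (let (l', h') = interval_aux P pre (l, h) xs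
      in (l' + (h' - l') * (\<Sum>k\<in>{k. k < x}. cond_prob P (pre @ xs) k),
          l' + (h' - l') * (\<Sum>k\<in>{k. k \<le> x}. cond_prob P (pre @ xs) k)))"
  by (induction xs arbitrary: pre l h) (simp_all add: case_prod_beta)

definition lo :: "('a::{finite,linorder} list \<Rightarrow> real) \<Rightarrow> 'a list \<Rightarrow> real" where
  "lo P s = fst (ends P s)"

definition hi :: "('a::{finite,linorder} list \<Rightarrow> real) \<Rightarrow> 'a list \<Rightarrow> real" where
  "hi P s = snd (ends P s)"

lemma lo_Nil: "lo P [] = 0" and hi_Nil: "hi P [] = 1"
  unfolding lo_def hi_def ends_def by simp_all

lemma lo_snoc: "lo P (s @ [x]) = lo P s + (hi P s - lo P s) * (\<Sum>k\<in>{k. k < x}. cond_prob P s k)"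
  and hi_snoc: "hi P (s @ [x]) = lo P s + (hi P s - lo P s) * (\<Sum>k\<in>{k. k \<le> x}. cond_prob P s k)"
  unfolding lo_def hi_def ends_def by (simp_all add: interval_aux_snoc case_prod_beta)

lemma interval_eq_lo_hi: "interval P s = {lo P s ..< hi P s}"
  unfolding interval_def lo_def hi_def ..

lemma cond_prob_nonneg: "process P \<Longrightarrow> 0 \<le> cond_prob P s k"
  unfolding cond_prob_def by (simp add: process_nonneg)

lemma sum_cond_prob_eq_1:
  assumes P: "process P" and pos: "0 < P s"
  shows "(\<Sum>k\<in>UNIV. cond_prob P s k) = 1"
proof -
  have "(\<Sum>k\<in>UNIV. cond_prob P s k) = (\<Sum>k\<in>UNIV. P (s @ [k])) / P s"
    unfolding cond_prob_def by (simp add: sum_divide_distrib)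
  then show ?thesis using process_eq_sum_snoc[OF P, of s] pos by simp
qed

lemma hi_minus_lo: assumes P: "process P" shows "hi P s - lo P s = P s"
proof (induction s rule: rev_induct)
  case Nil
  then show ?case using process_Nil[OF P] by (simp add: lo_Nil hi_Nil)
next
  case (snoc x s)
  have "{k. k \<le> x} = insert x {k. k < x}" by auto
  then have "hi P (s @ [x]) - lo P (s @ [x]) = P s * cond_prob P s x"
    unfolding lo_snoc hi_snoc snoc by (simp add: algebra_simps)
  also have "\<dots> = P (s @ [x])"
    using process_snoc_le[OF P, of s x] process_nonneg[OF P, of "s @ [x]"]
    unfolding cond_prob_def by (cases "P s = 0") simp_all
  finally show ?case .
qed

lemma lo_le_hi: "process P \<Longrightarrow> lo P s \<le> hi P s"
  using hi_minus_lo[of P s] process_nonneg[of P s] by simp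

lemma lo_le_lo_snoc: assumes P: "process P" shows "lo P s \<le> lo P (s @ [x])"
  using hi_minus_lo[OF P, of s]
  by (simp add: lo_snoc process_nonneg[OF P] sum_nonneg cond_prob_nonneg[OF P])

lemma hi_snoc_le_hi: assumes P: "process P" shows "hi P (s @ [x]) \<le> hi P s"
proof (cases "P s = 0")
  case True
  then show ?thesis using hi_minus_lo[OF P, of s] by (simp add: hi_snoc)
next
  case False
  then have pos: "0 < P s" using process_nonneg[OF P, of s] by simp
  have "(\<Sum>k\<in>{k. k \<le> x}. cond_prob P s k) \<le> (\<Sum>k\<in>UNIV. cond_prob P s k)"
    by (rule sum_mono2) (auto simp: cond_prob_nonneg[OF P])
  then have "(\<Sum>k\<in>{k. k \<le> x}. cond_prob P s k) \<le> 1" using sum_cond_prob_eq_1[OF P pos] by simp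
  then have "(hi P s - lo P s) * (\<Sum>k\<in>{k. k \<le> x}. cond_prob P s k) \<le> (hi P s - lo P s) * 1"
    using hi_minus_lo[OF P, of s] pos by (intro mult_left_mono) simp_all
  then show ?thesis by (simp add: hi_snoc)
qed

lemma lo_hi_append_mono:
  assumes P: "process P"
  shows "lo P s \<le> lo P (s @ t) \<and> hi P (s @ t) \<le> hi P s"
proof (induction t rule: rev_induct)
  case (snoc x t)
  then show ?case using lo_le_lo_snoc[OF P, of "s @ t" x] hi_snoc_le_hi[OF P, of "s @ t" x] by simp
qed simp

lemma interval_append_subset: "process P \<Longrightarrow> interval P (s @ t) \<subseteq> interval P s"
  using lo_hi_append_mono[of P s t] unfolding interval_eq_lo_hi by auto

lemma lo_nonneg: "process P \<Longrightarrow> 0 \<le> lo P s" and hi_le_1: "process P \<Longrightarrow> hi P s \<le> 1"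
  using lo_hi_append_mono[of P "[]" s] by (simp_all add: lo_Nil hi_Nil)

lemma interval_subset_unit: "process P \<Longrightarrow> interval P s \<subseteq> {0..<1}"
  using lo_nonneg[of P s] hi_le_1[of P s] by (auto simp: interval_eq_lo_hi)

lemma hi_snoc_le_lo_snoc:
  assumes P: "process P" and xx: "x < x'"
  shows "hi P (s @ [x]) \<le> lo P (s @ [x'])"
proof -
  have "(\<Sum>k\<in>{k. k \<le> x}. cond_prob P s k) \<le> (\<Sum>k\<in>{k. k < x'}. cond_prob P s k)"
    by (rule sum_mono2) (use xx in \<open>auto simp: cond_prob_nonneg[OF P]\<close>)
  then show ?thesis
    using hi_minus_lo[OF P, of s] process_nonneg[OF P, of s] by (simp add: lo_snoc hi_snoc mult_left_mono)
qed

lemma interval_disjoint: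
  assumes P: "process P"
  shows "length s = n \<Longrightarrow> length s' = n \<Longrightarrow> s \<noteq> s' \<Longrightarrow> interval P s \<inter> interval P s' = {}"
proof (induction n arbitrary: s s')
  case (Suc n)
  obtain u x u' x' where s: "s = u @ [x]" "length u = n" and s': "s' = u' @ [x']" "length u' = n"
    using Suc.prems(1,2) by (metis length_Suc_conv_rev)
  show ?case
  proof (cases "u = u'")
    case True
    then have "x < x' \<or> x' < x" using Suc.prems(3) s s' by auto
    then show ?thesis
      using hi_snoc_le_lo_snoc[OF P, of x x' u] hi_snoc_le_lo_snoc[OF P, of x' x u]
      unfolding s s' True interval_eq_lo_hi by auto
  next
    case False
    then have "interval P u \<inter> interval P u' = {}" using Suc.IH s s' by blast
    then show ?thesis using interval_append_subset[OF P, of u "[x]"] interval_append_subset[OF P, of u' "[x']"]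
      unfolding s s' by blast
  qed
qed simp

text \<open>
  The child intervals of s cover the interval of s: a point v is covered by the child of the least
  symbol x with v < hi (s @ [x]).
\<close>
lemma interval_snoc_cover:
  fixes P :: "'a::{finite,linorder} list \<Rightarrow> real"
  assumes P: "process P" and v: "v \<in> interval P s"
  shows "\<exists>x. v \<in> interval P (s @ [x])"
proof -
  have v: "lo P s \<le> v" "v < hi P s" using v unfolding interval_eq_lo_hi by auto
  have pos: "0 < P s" using hi_minus_lo[OF P, of s] v by simp
  have "{k. k \<le> Max UNIV} = (UNIV :: 'a set)" by auto
  then have "hi P (s @ [Max UNIV]) = hi P s"
    using sum_cond_prob_eq_1[OF P pos] by (simp add: hi_snoc)
  then have "v < hi P (s @ [Max UNIV])" using v by simp
  then have ne: "{x. v < hi P (s @ [x])} \<noteq> {}" by blast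
  define x0 where "x0 = Min {x. v < hi P (s @ [x])}"
  have x0: "v < hi P (s @ [x0])" unfolding x0_def using Min_in[OF finite ne] by blast
  have "lo P (s @ [x0]) \<le> v"
  proof (cases "{k. k < x0} = {}")
    case True
    then show ?thesis using v by (simp add: lo_snoc)
  next
    case False
    define x' where "x' = Max {k. k < x0}"
    have x': "x' < x0" unfolding x'_def using False by (metis (mono_tags) Max_in finite mem_Collect_eq)
    have "{k. k < x0} = {k. k \<le> x'}"
      using x' by (auto simp: x'_def)
    then have "lo P (s @ [x0]) = hi P (s @ [x'])" by (simp add: lo_snoc hi_snoc)
    moreover have "\<not> v < hi P (s @ [x'])"
    proof
      assume "v < hi P (s @ [x'])"
      then have "x0 \<le> x'" unfolding x0_def by (intro Min_le) simp_all
      then show False using x' by simp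
    qed
    ultimately show ?thesis by simp
  qed
  then show ?thesis using x0 unfolding interval_eq_lo_hi by auto
qed

lemma interval_cover:
  fixes P :: "'a::{finite,linorder} list \<Rightarrow> real"
  assumes P: "process P" and v: "0 \<le> v" "v < 1"
  shows "\<exists>y. length y = n \<and> v \<in> interval P y"
proof (induction n)
  case 0
  then show ?case using v by (simp add: interval_eq_lo_hi lo_Nil hi_Nil)
next
  case (Suc n)
  then obtain y where y: "length y = n" "v \<in> interval P y" by blast
  then obtain x where "v \<in> interval P (y @ [x])" using interval_snoc_cover[OF P] by blast
  then show ?case using y(1) by (intro exI[of _ "y @ [x]"]) simp
qed

lemma measure_interval: "process P \<Longrightarrow> measure lborel (interval P s) = P s"
  using hi_minus_lo[of P s] lo_le_hi[of P s] by (simp add: interval_eq_lo_hi)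

definition near_ends :: "('a::{finite,linorder} list \<Rightarrow> real) \<Rightarrow> real \<Rightarrow> 'a list \<Rightarrow> real set" where
  "near_ends P \<delta> s = {lo P s - \<delta> .. lo P s + \<delta>} \<union> {hi P s - \<delta> .. hi P s + \<delta>}"

lemma measure_near_ends_le: "0 \<le> \<delta> \<Longrightarrow> measure lborel (near_ends P \<delta> s) \<le> 4 * \<delta>"
  using measure_Un_le[of "{lo P s - \<delta> .. lo P s + \<delta>}" lborel "{hi P s - \<delta> .. hi P s + \<delta>}"]
  unfolding near_ends_def by simp

lemma near_ends_subset: "process P \<Longrightarrow> 0 \<le> \<delta> \<Longrightarrow> near_ends P \<delta> s \<subseteq> {-\<delta> .. 1 + \<delta>}"
  using lo_nonneg[of P s] hi_le_1[of P s] lo_le_hi[of P s] unfolding near_ends_def by auto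

lemma mem_near_ends_if_not_subset:
  assumes PX: "process PX" and small: "PX x \<le> \<delta>" and not_sub: "\<not> interval PX x \<subseteq> interval PY y"
    and u: "u \<in> interval PX x" "u \<in> interval PY y"
  shows "u \<in> near_ends PY \<delta> y"
proof -
  obtain v where v: "v \<in> interval PX x" "v \<notin> interval PY y" using not_sub by blast
  have "hi PX x - lo PX x \<le> \<delta>" using hi_minus_lo[OF PX, of x] small by simp
  then have "\<bar>u - v\<bar> < \<delta>" using u(1) v(1) unfolding interval_eq_lo_hi by auto
  then show ?thesis using u(2) v(2) unfolding near_ends_def interval_eq_lo_hi by auto
qed

lemma measure_UN_interval:
  assumes P: "process P" and B: "finite B" "\<And>x. x \<in> B \<Longrightarrow> length x = m"
  shows "measure lborel (\<Union>x\<in>B. interval P x) = (\<Sum>x\<in>B. P x)"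
proof -
  have "measure lborel (\<Union>x\<in>B. interval P x) = (\<Sum>x\<in>B. measure lborel (interval P x))"
  proof (rule measure_finite_Union[OF B(1)])
    show "disjoint_family_on (interval P) B"
      unfolding disjoint_family_on_def using interval_disjoint[OF P] B(2) by metis
  qed (auto simp: interval_eq_lo_hi lo_le_hi[OF P])
  then show ?thesis by (simp add: measure_interval[OF P])
qed

lemma prob_light_not_inside_le:
  fixes PX :: "'a::{finite,linorder} list \<Rightarrow> real" and PY :: "'b::{finite,linorder} list \<Rightarrow> real"
  assumes PX: "process PX" and PY: "process PY" and d: "0 < \<delta>"
  shows "prob_len PX m (\<lambda>x. PX x \<le> \<delta> \<and> \<not> (\<exists>y. length y = n \<and> interval PX x \<subseteq> interval PY y))
         \<le> prob_len PY n (\<lambda>y. PY y \<le> \<epsilon>) + 4 * \<delta> * real (card {y. length y = n \<and> \<epsilon> \<le> PY y})"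
proof -
  define B where "B = {x. length x = m \<and> PX x \<le> \<delta> \<and> \<not> (\<exists>y. length y = n \<and> interval PX x \<subseteq> interval PY y)}"
  define Light where "Light = {y::'b list. length y = n \<and> PY y \<le> \<epsilon>}"
  define Heavy where "Heavy = {y::'b list. length y = n \<and> \<epsilon> \<le> PY y}"
  have fin: "finite B" "finite Light" "finite Heavy"
    unfolding B_def Light_def Heavy_def by (simp_all only: finite_length_eq)
  have sets: "(\<Union>y\<in>Light. interval PY y) \<in> sets lborel" "(\<Union>y\<in>Heavy. near_ends PY \<delta> y) \<in> sets lborel"
    by (auto simp: near_ends_def interval_eq_lo_hi intro!: sets.finite_UN fin)
  have "prob_len PX m (\<lambda>x. PX x \<le> \<delta> \<and> \<not> (\<exists>y. length y = n \<and> interval PX x \<subseteq> interval PY y))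
      = measure lborel (\<Union>x\<in>B. interval PX x)"
    unfolding prob_len_def B_def by (rule measure_UN_interval[OF PX finite_length_eq, symmetric]) simp
  also have "\<dots> \<le> measure lborel ((\<Union>y\<in>Light. interval PY y) \<union> (\<Union>y\<in>Heavy. near_ends PY \<delta> y))"
  proof (rule measure_mono_fmeasurable)
    show "(\<Union>x\<in>B. interval PX x) \<subseteq> (\<Union>y\<in>Light. interval PY y) \<union> (\<Union>y\<in>Heavy. near_ends PY \<delta> y)"
    proof
      fix u assume "u \<in> (\<Union>x\<in>B. interval PX x)"
      then obtain x where x: "x \<in> B" and ux: "u \<in> interval PX x" by blast
      have "0 \<le> u" "u < 1" using interval_subset_unit[OF PX, of x] ux by auto
      then obtain y where y: "length y = n" "u \<in> interval PY y" using interval_cover[OF PY] by blast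
      have "u \<in> near_ends PY \<delta> y"
        using x y ux mem_near_ends_if_not_subset[OF PX] unfolding B_def by blast
      then show "u \<in> (\<Union>y\<in>Light. interval PY y) \<union> (\<Union>y\<in>Heavy. near_ends PY \<delta> y)"
        using y unfolding Light_def Heavy_def by (cases "PY y \<le> \<epsilon>") auto
    qed
    have "interval PY y \<subseteq> {-\<delta> .. 1 + \<delta>}" for y
      using interval_subset_unit[OF PY, of y] d by auto
    then have "(\<Union>y\<in>Light. interval PY y) \<union> (\<Union>y\<in>Heavy. near_ends PY \<delta> y) \<subseteq> {-\<delta> .. 1 + \<delta>}"
      using near_ends_subset[OF PY] d by (simp add: UN_least less_imp_le)
    then show "(\<Union>y\<in>Light. interval PY y) \<union> (\<Union>y\<in>Heavy. near_ends PY \<delta> y) \<in> fmeasurable lborel"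
      by (intro fmeasurableI2[OF fmeasurable_compact[OF compact_Icc]] sets.Un sets)
  qed (auto simp: interval_eq_lo_hi intro!: sets.finite_UN fin)
  also have "\<dots> \<le> measure lborel (\<Union>y\<in>Light. interval PY y) + measure lborel (\<Union>y\<in>Heavy. near_ends PY \<delta> y)"
    by (rule measure_Un_le[OF sets])
  also have "measure lborel (\<Union>y\<in>Light. interval PY y) \<le> (\<Sum>y\<in>Light. measure lborel (interval PY y))"
    by (rule measure_UNION_le[OF fin(2)]) (simp add: interval_eq_lo_hi)
  also have "\<dots> = prob_len PY n (\<lambda>y. PY y \<le> \<epsilon>)"
    unfolding prob_len_def Light_def by (simp add: measure_interval[OF PY])
  also have "measure lborel (\<Union>y\<in>Heavy. near_ends PY \<delta> y) \<le> (\<Sum>y\<in>Heavy. measure lborel (near_ends PY \<delta> y))"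
    by (rule measure_UNION_le[OF fin(3)]) (simp add: near_ends_def)
  also have "\<dots> \<le> (\<Sum>y\<in>Heavy. 4 * \<delta>)"
    using d by (intro sum_mono measure_near_ends_le) simp
  finally show ?thesis unfolding Heavy_def by (simp add: mult.commute)
qed

lemma prob_T_gt_interval_alg_le:
  assumes PX: "process PX"
  shows "prob_T_gt PX (interval_alg PX PY n) r
     \<le> prob_len PX (nat \<lfloor>r\<rfloor>) (\<lambda>x. \<not> (\<exists>y. length y = n \<and> interval PX x \<subseteq> interval PY y))"
  unfolding prob_T_gt_def
proof (rule prob_len_mono[OF PX])
  fix s assume "\<forall>i\<le>length s. interval_alg PX PY n (take i s) = None"
  then have "interval_alg PX PY n s = None" by (metis order_refl take_all)
  then show "\<not> (\<exists>y. length y = n \<and> interval PX s \<subseteq> interval PY y)"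
    unfolding interval_alg_def by (simp split: if_splits)
qed

text \<open>Take \<delta> = 2^{-ma} and \<epsilon> = 2^{-nb}: there are at most 2^{nb} target words heavier than \<epsilon>.\<close>
lemma prob_not_inside_le:
  fixes PX :: "'a::{finite,linorder} list \<Rightarrow> real" and PY :: "'b::{finite,linorder} list \<Rightarrow> real"
  assumes PX: "process PX" and PY: "process PY" and n: "0 < n" and m: "0 < m"
  shows "prob_len PX m (\<lambda>x. \<not> (\<exists>y. length y = n \<and> interval PX x \<subseteq> interval PY y))
         \<le> prob_len PX m (\<lambda>s. info_rate PX m s \<le> a) + prob_len PY n (\<lambda>s. b \<le> info_rate PY n s)
           + 4 * 2 powr (real n * b - real m * a)"
proof -
  define \<delta> where "\<delta> = 2 powr (- (real m * a))"
  define \<epsilon> where "\<epsilon> = 2 powr (- (real n * b))"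
  have "prob_len PX m (\<lambda>x. \<not> (\<exists>y. length y = n \<and> interval PX x \<subseteq> interval PY y))
      \<le> prob_len PX m (\<lambda>x. \<delta> < PX x \<or> PX x \<le> \<delta> \<and> \<not> (\<exists>y. length y = n \<and> interval PX x \<subseteq> interval PY y))"
    by (rule prob_len_mono[OF PX]) auto
  also have "\<dots> \<le> prob_len PX m (\<lambda>x. \<delta> < PX x)
      + prob_len PX m (\<lambda>x. PX x \<le> \<delta> \<and> \<not> (\<exists>y. length y = n \<and> interval PX x \<subseteq> interval PY y))"
    by (rule prob_len_disj_le[OF PX])
  also have "prob_len PX m (\<lambda>x. \<delta> < PX x) \<le> prob_len PX m (\<lambda>s. info_rate PX m s \<le> a)"
    unfolding prob_len_info_rate_le[OF PX m] \<delta>_def by (rule prob_len_mono[OF PX]) simp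
  also have "prob_len PX m (\<lambda>x. PX x \<le> \<delta> \<and> \<not> (\<exists>y. length y = n \<and> interval PX x \<subseteq> interval PY y))
      \<le> prob_len PY n (\<lambda>y. PY y \<le> \<epsilon>) + 4 * \<delta> * real (card {y. length y = n \<and> \<epsilon> \<le> PY y})"
    by (rule prob_light_not_inside_le[OF PX PY]) (simp add: \<delta>_def)
  also have "prob_len PY n (\<lambda>y. PY y \<le> \<epsilon>) = prob_len PY n (\<lambda>s. b \<le> info_rate PY n s)"
    unfolding \<epsilon>_def by (simp add: prob_len_info_rate_ge[OF PY n])
  also have "4 * \<delta> * real (card {y. length y = n \<and> \<epsilon> \<le> PY y}) \<le> 4 * \<delta> * 2 powr (real n * b)"
    unfolding \<epsilon>_def by (intro mult_left_mono card_heavy_le[OF PY]) (simp add: \<delta>_def)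
  also have "4 * \<delta> * 2 powr (real n * b) = 4 * 2 powr (real n * b - real m * a)"
    unfolding \<delta>_def by (simp add: powr_add[symmetric])
  finally show ?thesis by simp
qed

lemma interval_alg_achievable:
  fixes PX :: "'a::{finite,linorder} list \<Rightarrow> real" and PY :: "'b::{finite,linorder} list \<Rightarrow> real"
  assumes PX: "process PX" and PY: "process PY"
    and a: "a \<in> inf_ent_set PX" "0 < a" and b: "b \<in> sup_ent_set PY" and ba: "b < R * a"
  shows "achievable PX (\<lambda>n. interval_alg PX PY n) R"
proof -
  have "0 < R * a" using ba sup_ent_set_pos[OF PY b] by linarith
  then have R: "0 < R" using a(2) by (simp add: zero_less_mult_iff)
  define c where "c = R * a - b"
  have c: "0 < c" using ba unfolding c_def by simp
  define m where "m n = nat \<lfloor>real n * R\<rfloor>" for n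
  have m_lim: "filterlim m at_top sequentially" unfolding m_def using R by real_asymp
  have exponent: "4 * 2 powr (real n * b - real (m n) * a) \<le> 4 * 2 powr a * 2 powr (- (real n * c))" for n
  proof -
    have "(real n * R - 1) * a \<le> real (m n) * a"
      using real_nat_floor_bounds(2)[of "real n * R"] R a(2) unfolding m_def by (simp add: mult_right_mono)
    then have "real n * b - real (m n) * a \<le> a + - (real n * c)" unfolding c_def by (simp add: algebra_simps)
    then have "2 powr (real n * b - real (m n) * a) \<le> 2 powr (a + - (real n * c))"
      by (intro powr_mono) simp_all
    then show ?thesis unfolding powr_add mult.assoc by linarith
  qed
  have key: "prob_T_gt PX (interval_alg PX PY n) (real n * R) \<le> prob_len PX (m n) (\<lambda>s. info_rate PX (m n) s \<le> a)
      + prob_len PY n (\<lambda>s. b \<le> info_rate PY n s) + 4 * 2 powr a * 2 powr (- (real n * c))"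
    if "1 \<le> n" "1 \<le> m n" for n
    using prob_T_gt_interval_alg_le[OF PX, of PY n "real n * R"] prob_not_inside_le[OF PX PY, of n "m n" a b]
      exponent[of n] that
    unfolding m_def by linarith
  have nonneg: "0 \<le> prob_T_gt PX (interval_alg PX PY n) (real n * R)" for n
    unfolding prob_T_gt_def by (rule prob_len_nonneg[OF PX])
  have "(\<lambda>n. prob_T_gt PX (interval_alg PX PY n) (real n * R)) \<longlonglongrightarrow> 0"
  proof (rule tendsto_0_if_eventually_le_add3)
    have "eventually (\<lambda>n. 1 \<le> m n) sequentially" using m_lim by (simp add: filterlim_at_top)
    then show "eventually (\<lambda>n. 0 \<le> prob_T_gt PX (interval_alg PX PY n) (real n * R)
        \<and> prob_T_gt PX (interval_alg PX PY n) (real n * R) \<le> prob_len PX (m n) (\<lambda>s. info_rate PX (m n) s \<le> a)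
          + prob_len PY n (\<lambda>s. b \<le> info_rate PY n s) + 4 * 2 powr a * 2 powr (- (real n * c))) sequentially"
      using eventually_ge_at_top[of 1] by eventually_elim (simp add: key nonneg)
    show "(\<lambda>n. prob_len PX (m n) (\<lambda>s. info_rate PX (m n) s \<le> a)) \<longlonglongrightarrow> 0"
      using filterlim_compose[OF _ m_lim] a(1) unfolding inf_ent_set_def by blast
    show "(\<lambda>n. prob_len PY n (\<lambda>s. b \<le> info_rate PY n s)) \<longlonglongrightarrow> 0"
      using b unfolding sup_ent_set_def by simp
    show "(\<lambda>n. 4 * 2 powr a * 2 powr (- (real n * c))) \<longlonglongrightarrow> 0" using c by real_asymp
  qed
  then show ?thesis unfolding achievable_def using R by simp
qed

lemma R_star_int_upper:
  fixes PX :: "'a::{finite,linorder} list \<Rightarrow> real" and PY :: "'b::{finite,linorder} list \<Rightarrow> real"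
  assumes PX: "process PX" and PY: "process PY" and hx: "0 < inf_ent PX"
  shows "R_star_int PX PY \<le> ereal (sup_ent PY / inf_ent PX)"
  unfolding R_star_int_def
proof (rule ereal_le_epsilon2)
  fix e :: real assume e: "0 < e"
  define R where "R = sup_ent PY / inf_ent PX + e"
  define D where "D = R * inf_ent PX - sup_ent PY"
  have R: "0 < R"
    unfolding R_def by (intro add_nonneg_pos divide_nonneg_pos) (use sup_ent_nonneg[OF PY] hx e in auto)
  have D: "0 < D" using hx e unfolding D_def R_def by (simp add: algebra_simps)
  text \<open>Thresholds a < inf_ent X and b > sup_ent Y, each within g, still satisfy b < R a.\<close>
  define g where "g = min (inf_ent PX / 2) (D / (2 * (R + 1)))"
  have g: "0 < g" "g < inf_ent PX" unfolding g_def using hx D R by auto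
  have "g \<le> D / (2 * (R + 1))" unfolding g_def by simp
  then have "g * (2 * (R + 1)) \<le> D" using R by (simp add: pos_le_divide_eq)
  then have "R * g + g \<le> D / 2" by (simp add: algebra_simps)
  then have "sup_ent PY + g < R * (inf_ent PX - g)"
    using D unfolding D_def by (simp add: right_diff_distrib)
  then have "achievable PX (\<lambda>n. interval_alg PX PY n) R"
    using g less_inf_ent_in_inf_ent_set[OF PX, of "inf_ent PX - g"] sup_ent_add_in_sup_ent_set[OF PY g(1)]
    by (intro interval_alg_achievable[OF PX PY]) simp_all
  then have "Inf {ereal R |R. achievable PX (\<lambda>n. interval_alg PX PY n) R} \<le> ereal R"
    by (intro Inf_lower) blast
  then show "Inf {ereal R |R. achievable PX (\<lambda>n. interval_alg PX PY n) R} \<le> ereal (sup_ent PY / inf_ent PX) + ereal e"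
    unfolding R_def by simp
qed

theorem theorem3:
  fixes PX :: "'a::{finite,linorder} list \<Rightarrow> real"
    and PY :: "'b::{finite,linorder} list \<Rightarrow> real"
  assumes "process PX" and "process PY" and "inf_ent PX > 0"
  shows "R_star_int PX PY \<le> ereal (sup_ent PY / inf_ent PX) \<and>
         R_star PX PY \<ge> ereal (max (sup_ent PY / sup_ent PX) (inf_ent PY / inf_ent PX))"
  using R_star_int_upper[OF assms] R_star_lower[OF assms] by simp

end
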